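(* Let $k$ be a positive integer. A graph $G$ belongs to $\mathcal{F}_k$ if and only if $G=G_1*_k G_2$ where, for each $i=1,2$, either $G_i=K_1$ or $G_i$ is uniformly dense with density $k$.
   Context: Graphs are finite, loopless, possibly with multiple edges. $\kappa'(G)$ is the edge connectivity; $\tau(G)$ is the maximum number of edge-disjoint spanning trees of a connected graph $G$. $\omega(G)$ is the number of components. For a nontrivial graph $G$, $d(G)=\frac{|E(G)|}{|V(G)|-\omega(G)}$ and $\gamma(G)=\max d(H)$ over subgraphs $H$ with nonzero denominator; $G$ is uniformly dense with density $k$ if $d(G)=\gamma(G)=k$. For vertex-disjoint connected graphs $G_1,G_2$ and a set $K$ of $k$ edges each having one end in $V(G_1)$ and the other in $V(G_2)$, the $k$-edge-join $G_1*_k G_2$ is the graph with vertex set $V(G_1)\cup V(G_2)$ and edge set $E(G_1)\cup E(G_2)\cup K$. For $n>1$, $\mathcal{F}_{k,n}$ is the set of graphs $G$ on $n$ vertices with $\kappa'(G)=\tau(G)=k$ whose number of edges is minimum among all graphs on $n$ vertices with $\kappa'=\tau=k$; $\mathcal{F}_k=\bigcup_{n>1}\mathcal{F}_{k,n}$. *)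

theory Defs
  imports Complex_Main "HOL-Library.Multiset"
begin

text \<open>Parallel edges are repeated elements of the multiset.\<close>

definition mgraph :: "'a set \<Rightarrow> 'a set multiset \<Rightarrow> bool" where
  "mgraph V E \<longleftrightarrow> finite V \<and> (\<forall>e\<in>#E. e \<subseteq> V \<and> card e = 2)"

definition adj :: "'a set multiset \<Rightarrow> ('a \<times> 'a) set" where
  "adj E = {(u, v). {u, v} \<in># E}"

definition connected_mg :: "'a set \<Rightarrow> 'a set multiset \<Rightarrow> bool" where
  "connected_mg V E \<longleftrightarrow> V \<noteq> {} \<and> (\<forall>u\<in>V. \<forall>v\<in>V. (u, v) \<in> (adj E)\<^sup>*)"

definition comp_rel :: "'a set \<Rightarrow> 'a set multiset \<Rightarrow> ('a \<times> 'a) set" where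
  "comp_rel V E = {(u, v). u \<in> V \<and> v \<in> V \<and> (u, v) \<in> (adj E)\<^sup>*}"

definition num_comps :: "'a set \<Rightarrow> 'a set multiset \<Rightarrow> nat" where
  "num_comps V E = card (V // comp_rel V E)"

text \<open>Edge connectivity \<kappa>'(G): least number of edges whose removal disconnects G
(meaningful for graphs with at least two vertices).\<close>
definition edge_conn :: "'a set \<Rightarrow> 'a set multiset \<Rightarrow> nat" where
  "edge_conn V E = (LEAST m. \<exists>F. F \<subseteq># E \<and> size F = m \<and> \<not> connected_mg V (E - F))"

definition spanning_tree :: "'a set \<Rightarrow> 'a set multiset \<Rightarrow> 'a set multiset \<Rightarrow> bool" where
  "spanning_tree V E T \<longleftrightarrow> T \<subseteq># E \<and> connected_mg V T \<and>
     (\<forall>e\<in>#T. \<not> connected_mg V (T - {#e#}))"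

definition has_disjoint_trees :: "'a set \<Rightarrow> 'a set multiset \<Rightarrow> nat \<Rightarrow> bool" where
  "has_disjoint_trees V E k \<longleftrightarrow>
     (\<exists>Ts :: nat \<Rightarrow> 'a set multiset. (\<forall>i<k. spanning_tree V E (Ts i)) \<and> (\<Sum>i<k. Ts i) \<subseteq># E)"

definition tree_pack :: "'a set \<Rightarrow> 'a set multiset \<Rightarrow> nat" where
  "tree_pack V E = (GREATEST k. has_disjoint_trees V E k)"

definition dens :: "'a set \<Rightarrow> 'a set multiset \<Rightarrow> real" where
  "dens V E = real (size E) / (real (card V) - real (num_comps V E))"

definition subgraph :: "'a set \<Rightarrow> 'a set multiset \<Rightarrow> 'a set \<Rightarrow> 'a set multiset \<Rightarrow> bool" where
  "subgraph V' E' V E \<longleftrightarrow> V' \<subseteq> V \<and> E' \<subseteq># E \<and> (\<forall>e\<in>#E'. e \<subseteq> V')"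

definition gamma :: "'a set \<Rightarrow> 'a set multiset \<Rightarrow> real" where
  "gamma V E = Max {dens V' E' | V' E'. subgraph V' E' V E \<and>
                     real (card V') - real (num_comps V' E') \<noteq> 0}"

definition uniformly_dense :: "real \<Rightarrow> 'a set \<Rightarrow> 'a set multiset \<Rightarrow> bool" where
  "uniformly_dense k V E \<longleftrightarrow> dens V E = k \<and> gamma V E = k"

definition is_edge_join ::
  "'a set \<Rightarrow> 'a set multiset \<Rightarrow> nat \<Rightarrow> 'a set \<Rightarrow> 'a set multiset \<Rightarrow> 'a set \<Rightarrow> 'a set multiset \<Rightarrow> bool" where
  "is_edge_join V E k V1 E1 V2 E2 \<longleftrightarrow>
     mgraph V1 E1 \<and> mgraph V2 E2 \<and> connected_mg V1 E1 \<and> connected_mg V2 E2 \<and> V1 \<inter> V2 = {} \<and>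
     (\<exists>K. size K = k \<and> (\<forall>e\<in>#K. \<exists>u\<in>V1. \<exists>v\<in>V2. e = {u, v}) \<and>
          V = V1 \<union> V2 \<and> E = E1 + E2 + K)"

definition is_K1 :: "'a set \<Rightarrow> 'a set multiset \<Rightarrow> bool" where
  "is_K1 V E \<longleftrightarrow> card V = 1 \<and> E = {#}"

text \<open>\<F>_{k,n} and \<F>_k.  Competitors range over graphs with the same vertex type,
which is no restriction (any graph on n vertices has an isomorphic copy on V).\<close>
definition in_Fkn :: "nat \<Rightarrow> nat \<Rightarrow> 'a set \<Rightarrow> 'a set multiset \<Rightarrow> bool" where
  "in_Fkn k n V E \<longleftrightarrow> n > 1 \<and> mgraph V E \<and> card V = n \<and> edge_conn V E = k \<and> tree_pack V E = k \<and>
     (\<forall>(V' :: 'a set) E'. mgraph V' E' \<and> card V' = n \<and> edge_conn V' E' = k \<and> tree_pack V' E' = k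
        \<longrightarrow> size E \<le> size E')"

definition in_Fk :: "nat \<Rightarrow> 'a set \<Rightarrow> 'a set multiset \<Rightarrow> bool" where
  "in_Fk k V E \<longleftrightarrow> (\<exists>n>1. in_Fkn k n V E)"

end

theory Submission
  imports Defs
begin

text \<open>
  A graph in \<open>\<F>_{k,n}\<close> has \<open>\<tau> = k\<close>, hence at least \<open>k (n - 1)\<close> edges, and the \<open>k\<close>-fold star
  shows that this many suffice; so \<open>\<F>_{k,n}\<close> consists of the graphs with \<open>\<kappa>' = \<tau> = k\<close> and
  exactly \<open>k (n - 1)\<close> edges. Such a graph is the union of \<open>k\<close> spanning trees, so
  \<open>\<gamma> \<le> k\<close> by the easy half of Nash-Williams' covering theorem. Deleting a minimum cut of
  \<open>k\<close> edges leaves two sides \<open>G\<^sub>1, G\<^sub>2\<close>; each carries at most \<open>k (|V\<^sub>i| - \<omega>(G\<^sub>i))\<close> edges,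
  and comparing with the total \<open>k (n - 1)\<close> forces both sides to be connected with exactly
  \<open>k (|V\<^sub>i| - 1)\<close> edges, i.e.\ \<open>K\<^sub>1\<close> or uniformly dense of density \<open>k\<close>.

  Conversely, the hard half of Nash-Williams' theorem, proved with Edmonds' augmenting
  chains for the union of \<open>k\<close> graphic matroids, splits each side into \<open>k\<close> spanning trees;
  joining the \<open>i\<close>-th trees by the \<open>i\<close>-th join edge gives \<open>k\<close> edge-disjoint spanning trees
  with \<open>k (n - 1)\<close> edges in total, and the \<open>k\<close> join edges form a cut, so \<open>\<kappa>' = \<tau> = k\<close>.
\<close>

section \<open>Reachability and components\<close>

abbreviation reach :: "'a set multiset \<Rightarrow> ('a \<times> 'a) set" where
  "reach E \<equiv> (adj E)\<^sup>*"

lemma sym_adj: "sym (adj E)"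
  by (auto simp: sym_def adj_def insert_commute)

lemma reach_sym: "(u, v) \<in> reach E \<Longrightarrow> (v, u) \<in> reach E"
  by (meson sym_rtrancl sym_adj symD)

lemma adj_mono: "E \<subseteq># E' \<Longrightarrow> adj E \<subseteq> adj E'"
  by (auto simp: adj_def dest: mset_subset_eqD)

lemma reach_mono: "E \<subseteq># E' \<Longrightarrow> (u, v) \<in> reach E \<Longrightarrow> (u, v) \<in> reach E'"
  using adj_mono rtrancl_mono by blast

lemma reach_edge: "{u, v} \<in># E \<Longrightarrow> (u, v) \<in> reach E"
  by (auto simp: adj_def)

lemma reach_add_edge_iff:
  "(x, z) \<in> reach (add_mset {a, b} E) \<longleftrightarrow>
     (x, z) \<in> reach E \<or> ((x, a) \<in> reach E \<and> (b, z) \<in> reach E) \<or> ((x, b) \<in> reach E \<and> (a, z) \<in> reach E)"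
    (is "?lhs \<longleftrightarrow> ?rhs")
proof
  assume ?lhs
  then show ?rhs
  proof (induction rule: rtrancl_induct)
    case (step y z)
    then have "(y, z) \<in> adj E \<or> (y = a \<and> z = b) \<or> (y = b \<and> z = a)"
      by (auto simp: adj_def doubleton_eq_iff)
    then show ?case
    proof (elim disjE conjE)
      assume "(y, z) \<in> adj E"
      with step.IH show ?thesis by (blast intro: rtrancl_into_rtrancl)
    next
      assume "y = a" "z = b"
      with step.IH show ?thesis by (blast intro: rtrancl_trans reach_sym)
    next
      assume "y = b" "z = a"
      with step.IH show ?thesis by (blast intro: rtrancl_trans reach_sym)
    qed
  qed simp
next
  have ab: "(a, b) \<in> reach (add_mset {a, b} E)" "(b, a) \<in> reach (add_mset {a, b} E)"
    by (simp_all add: reach_edge reach_sym)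
  have "\<And>p q. (p, q) \<in> reach E \<Longrightarrow> (p, q) \<in> reach (add_mset {a, b} E)"
    using reach_mono[of E "add_mset {a, b} E"] by simp
  with ab show "?rhs \<Longrightarrow> ?lhs"
    by (meson rtrancl_trans)
qed

lemma reach_add_reached_edge:
  assumes "(a, b) \<in> reach E"
  shows "reach (add_mset {a, b} E) = reach E"
proof (intro set_eqI, unfold split_paired_all)
  fix x z
  show "(x, z) \<in> reach (add_mset {a, b} E) \<longleftrightarrow> (x, z) \<in> reach E"
    unfolding reach_add_edge_iff using assms reach_sym[OF assms] by (blast intro: rtrancl_trans)
qed

lemma reach_add_edge_from_end:
  assumes "(a, x) \<in> reach E"
  shows "(x, y) \<in> reach (add_mset {a, b} E) \<longleftrightarrow> (a, y) \<in> reach E \<or> (b, y) \<in> reach E"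
  using assms reach_sym[OF assms] unfolding reach_add_edge_iff by (meson rtrancl_trans)

lemma equiv_comp_rel: "equiv V (comp_rel V E)"
  unfolding equiv_def refl_on_def sym_def trans_def comp_rel_def
  by (auto intro: reach_sym rtrancl_trans)

lemma comp_rel_class: "x \<in> V \<Longrightarrow> comp_rel V E `` {x} = {y \<in> V. (x, y) \<in> reach E}"
  by (auto simp: comp_rel_def)

lemma num_comps_eq_card_classes: "num_comps V E = card ((\<lambda>x. comp_rel V E `` {x}) ` V)"
proof -
  have "V // comp_rel V E = (\<lambda>x. comp_rel V E `` {x}) ` V"
    unfolding quotient_def by auto
  then show ?thesis
    by (simp add: num_comps_def)
qed

lemma num_comps_no_edges: "finite V \<Longrightarrow> num_comps V {#} = card V"
proof -
  assume "finite V"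
  have "\<And>x. x \<in> V \<Longrightarrow> comp_rel V {#} `` {x} = {x}"
    by (auto simp: comp_rel_def adj_def)
  then have "(\<lambda>x. comp_rel V {#} `` {x}) ` V = (\<lambda>x. {x}) ` V"
    by (auto simp: image_def)
  then show ?thesis
    by (simp add: num_comps_eq_card_classes card_image)
qed

lemma num_comps_le_card: "finite V \<Longrightarrow> num_comps V E \<le> card V"
  by (simp add: num_comps_eq_card_classes card_image_le)

lemma num_comps_pos: "finite V \<Longrightarrow> V \<noteq> {} \<Longrightarrow> 0 < num_comps V E"
  by (simp add: num_comps_eq_card_classes card_gt_0_iff)

lemma connected_mg_iff_num_comps:
  assumes "finite V"
  shows "connected_mg V E \<longleftrightarrow> V \<noteq> {} \<and> num_comps V E = 1"
proof
  assume "connected_mg V E"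
  then have "V \<noteq> {}" "\<And>x. x \<in> V \<Longrightarrow> comp_rel V E `` {x} = V"
    by (auto simp: connected_mg_def comp_rel_def)
  then have "V \<noteq> {}" "(\<lambda>x. comp_rel V E `` {x}) ` V = {V}"
    by auto
  then show "V \<noteq> {} \<and> num_comps V E = 1"
    by (simp add: num_comps_eq_card_classes)
next
  assume "V \<noteq> {} \<and> num_comps V E = 1"
  then obtain C where "V \<noteq> {}" and C: "(\<lambda>x. comp_rel V E `` {x}) ` V = {C}"
    by (metis card_1_singletonE num_comps_eq_card_classes)
  have "(u, v) \<in> reach E" if "u \<in> V" "v \<in> V" for u v
  proof -
    have "\<forall>x\<in>V. comp_rel V E `` {x} = C"
      using C by (auto simp: image_def)
    then have "comp_rel V E `` {u} = comp_rel V E `` {v}"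
      using that by simp
    moreover have "v \<in> comp_rel V E `` {v}"
      using that by (simp add: comp_rel_def)
    ultimately have "v \<in> comp_rel V E `` {u}"
      by simp
    then show ?thesis
      by (simp add: comp_rel_def)
  qed
  with \<open>V \<noteq> {}\<close> show "connected_mg V E"
    by (simp add: connected_mg_def)
qed

lemma num_comps_add_reached_edge:
  "(a, b) \<in> reach E \<Longrightarrow> num_comps V (add_mset {a, b} E) = num_comps V E"
  by (simp add: num_comps_def comp_rel_def reach_add_reached_edge)

lemma comp_class_add_edge:
  assumes "a \<in> V" "b \<in> V" "x \<in> V"
  shows "comp_rel V (add_mset {a, b} E) `` {x} =
    (if x \<in> comp_rel V E `` {a} \<union> comp_rel V E `` {b}
     then comp_rel V E `` {a} \<union> comp_rel V E `` {b} else comp_rel V E `` {x})"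
proof -
  have "(a, x) \<in> reach E \<or> (b, x) \<in> reach E \<Longrightarrow>
      (x, y) \<in> reach (add_mset {a, b} E) \<longleftrightarrow> (a, y) \<in> reach E \<or> (b, y) \<in> reach E" for y
    using reach_add_edge_from_end[of a x E y b] reach_add_edge_from_end[of b x E y a]
    by (auto simp: insert_commute)
  moreover have "(a, x) \<notin> reach E \<Longrightarrow> (b, x) \<notin> reach E \<Longrightarrow>
      (x, y) \<in> reach (add_mset {a, b} E) \<longleftrightarrow> (x, y) \<in> reach E" for y
    using reach_sym reach_add_edge_iff by metis
  ultimately show ?thesis
    using assms by (auto simp: comp_rel_class)
qed

lemma comp_rel_class_self: "x \<in> V \<Longrightarrow> x \<in> comp_rel V E `` {x}"
  by (simp add: comp_rel_def)

lemma comp_rel_class_eq: "x \<in> V \<Longrightarrow> y \<in> comp_rel V E `` {x} \<Longrightarrow> comp_rel V E `` {y} = comp_rel V E `` {x}"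
  using equiv_comp_rel by (metis equiv_class_eq_iff Image_singleton_iff)

lemma comp_classes_add_edge:
  fixes E :: "'a set multiset"
  assumes ab: "a \<in> V" "b \<in> V"
  defines "cls \<equiv> \<lambda>x. comp_rel V E `` {x}"
  shows "(\<lambda>x. comp_rel V (add_mset {a, b} E) `` {x}) ` V =
    insert (cls a \<union> cls b) (cls ` V - {cls a, cls b})"
proof (intro equalityI subsetI)
  fix C assume "C \<in> (\<lambda>x. comp_rel V (add_mset {a, b} E) `` {x}) ` V"
  then obtain x where x: "x \<in> V" "C = comp_rel V (add_mset {a, b} E) `` {x}"
    by blast
  then show "C \<in> insert (cls a \<union> cls b) (cls ` V - {cls a, cls b})"
    using comp_class_add_edge[OF ab x(1), of E] comp_rel_class_self[OF x(1), of E] by (auto simp: cls_def)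
next
  fix C assume "C \<in> insert (cls a \<union> cls b) (cls ` V - {cls a, cls b})"
  then consider "C = cls a \<union> cls b" | x where "x \<in> V" "C = cls x" "C \<noteq> cls a" "C \<noteq> cls b"
    by blast
  then show "C \<in> (\<lambda>x. comp_rel V (add_mset {a, b} E) `` {x}) ` V"
  proof cases
    case 1
    have "comp_rel V (add_mset {a, b} E) `` {a} = C"
      using comp_class_add_edge[OF ab ab(1), of E] comp_rel_class_self[OF ab(1)] 1 by (simp add: cls_def)
    then show ?thesis
      using ab(1) by blast
  next
    case 2
    have "x \<notin> cls a" "x \<notin> cls b"
      using comp_rel_class_eq[OF ab(1), of x] comp_rel_class_eq[OF ab(2), of x] 2(2-4) by (auto simp: cls_def)
    then have "comp_rel V (add_mset {a, b} E) `` {x} = C"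
      using comp_class_add_edge[OF ab 2(1), of E] 2(2) by (simp add: cls_def)
    then show ?thesis
      using 2(1) by blast
  qed
qed

text \<open>The classes of the two ends are distinct and are merged into one, which is new.\<close>

lemma num_comps_add_bridge:
  assumes fin: "finite V" and ab: "a \<in> V" "b \<in> V" and bridge: "(a, b) \<notin> reach E"
  shows "num_comps V (add_mset {a, b} E) + 1 = num_comps V E"
proof -
  let ?cls = "\<lambda>x. comp_rel V E `` {x}"
  have "?cls a \<noteq> ?cls b"
    using ab bridge by (auto simp: comp_rel_def)
  have "?cls a \<union> ?cls b \<notin> ?cls ` V"
  proof
    assume "?cls a \<union> ?cls b \<in> ?cls ` V"
    then obtain x where x: "x \<in> V" "?cls a \<union> ?cls b = ?cls x"
      by blast
    then have "a \<in> ?cls x" "b \<in> ?cls x"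
      using comp_rel_class_self[OF ab(1), of E] comp_rel_class_self[OF ab(2), of E] by auto
    then have "?cls a = ?cls x" "?cls b = ?cls x"
      using comp_rel_class_eq[OF x(1)] by simp_all
    with \<open>?cls a \<noteq> ?cls b\<close> show False
      by simp
  qed
  moreover have AB: "{?cls a, ?cls b} \<subseteq> ?cls ` V"
    using ab by auto
  moreover have "card {?cls a, ?cls b} \<le> card (?cls ` V)"
    using fin AB by (intro card_mono) auto
  ultimately show ?thesis
    using fin \<open>?cls a \<noteq> ?cls b\<close> unfolding num_comps_eq_card_classes comp_classes_add_edge[OF ab]
    by (simp add: card_Diff_subset card_insert_if)
qed

definition edges_in :: "'a set \<Rightarrow> 'a set multiset \<Rightarrow> bool" where
  "edges_in V E \<longleftrightarrow> (\<forall>e\<in>#E. \<exists>a\<in>V. \<exists>b\<in>V. a \<noteq> b \<and> e = {a, b})"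

lemma edges_in_submset: "edges_in V E \<Longrightarrow> F \<subseteq># E \<Longrightarrow> edges_in V F"
  unfolding edges_in_def by (meson mset_subset_eqD)

lemma edges_in_mono: "V \<subseteq> W \<Longrightarrow> edges_in V E \<Longrightarrow> edges_in W E"
  unfolding edges_in_def by (meson subsetD)

lemma edges_in_add_mset [simp]:
  "edges_in V (add_mset e E) \<longleftrightarrow> (\<exists>a\<in>V. \<exists>b\<in>V. a \<noteq> b \<and> e = {a, b}) \<and> edges_in V E"
  unfolding edges_in_def by auto

lemma edges_in_union [simp]: "edges_in V (E + F) \<longleftrightarrow> edges_in V E \<and> edges_in V F"
  unfolding edges_in_def by auto

lemma mgraph_iff_edges_in: "mgraph V E \<longleftrightarrow> finite V \<and> edges_in V E"
  unfolding mgraph_def edges_in_def by (fastforce simp: card_2_iff)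

lemma num_comps_add_edge_bounds:
  assumes "finite V" "a \<in> V" "b \<in> V"
  shows "num_comps V (add_mset {a, b} E) \<le> num_comps V E"
    and "num_comps V E \<le> num_comps V (add_mset {a, b} E) + 1"
  using num_comps_add_reached_edge[of a b E V] num_comps_add_bridge[OF assms, of E]
  by (cases "(a, b) \<in> reach E"; simp)+

lemma num_comps_add_edges:
  assumes "finite V" "edges_in V C"
  shows "num_comps V (F + C) \<le> num_comps V F"
  using assms(2)
proof (induction C)
  case (add e C)
  then obtain a b where "a \<in> V" "b \<in> V" "e = {a, b}"
    by auto
  then show ?case
    using num_comps_add_edge_bounds(1)[OF assms(1), of a b "F + C"] add by simp
qed simp

lemma num_comps_antimono:
  assumes "finite V" "edges_in V E" "F \<subseteq># E"
  shows "num_comps V E \<le> num_comps V F"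
proof -
  have "edges_in V (E - F)"
    using assms(2) by (rule edges_in_submset) simp
  then show ?thesis
    using num_comps_add_edges[OF assms(1), of "E - F" F] assms(3) by simp
qed

lemma card_le_size_plus_num_comps:
  assumes "finite V" "edges_in V E"
  shows "card V \<le> size E + num_comps V E"
  using assms(2)
proof (induction E)
  case (add e E)
  then obtain a b where "a \<in> V" "b \<in> V" "e = {a, b}"
    by auto
  then show ?case
    using num_comps_add_edge_bounds(2)[OF assms(1), of a b E] add by simp
qed (simp add: num_comps_no_edges assms(1))

lemma num_comps_less_card:
  assumes "finite V" "edges_in V E" "E \<noteq> {#}"
  shows "num_comps V E < card V"
proof -
  obtain a b where ab: "a \<in> V" "b \<in> V" "a \<noteq> b" "{a, b} \<in># E"
    using assms(2,3) unfolding edges_in_def by (metis multiset_nonemptyE)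
  have "(a, b) \<notin> reach {#}"
    using ab(3) by (simp add: adj_def)
  then have "num_comps V {#{a, b}#} + 1 = card V"
    using num_comps_add_bridge[OF assms(1) ab(1,2)] num_comps_no_edges[OF assms(1)] by simp
  moreover have "num_comps V E \<le> num_comps V {#{a, b}#}"
    using num_comps_antimono[OF assms(1,2)] ab(4) by simp
  ultimately show ?thesis
    by simp
qed

section \<open>Forests and spanning trees\<close>

definition is_forest :: "'a set multiset \<Rightarrow> bool" where
  "is_forest F \<longleftrightarrow> (\<forall>a b. {a, b} \<in># F \<longrightarrow> (a, b) \<notin> reach (F - {#{a, b}#}))"

lemma is_forest_submset:
  assumes "is_forest F" "G \<subseteq># F"
  shows "is_forest G"
  unfolding is_forest_def
proof (intro allI impI notI)
  fix a b assume "{a, b} \<in># G" "(a, b) \<in> reach (G - {#{a, b}#})"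
  moreover have "G - {#{a, b}#} \<subseteq># F - {#{a, b}#}"
    using assms(2) by (simp add: subseteq_mset_def diff_le_mono)
  ultimately show False
    using assms reach_mono unfolding is_forest_def by (metis mset_subset_eqD)
qed

text \<open>An edge of \<open>F\<close> that closed a cycle with \<open>{a, b}\<close> would already connect \<open>a\<close> and \<open>b\<close> in \<open>F\<close>.\<close>

lemma is_forest_add_bridge:
  assumes forest: "is_forest F" and bridge: "(a, b) \<notin> reach F"
  shows "is_forest (add_mset {a, b} F)"
  unfolding is_forest_def
proof (intro allI impI)
  fix u v assume uv: "{u, v} \<in># add_mset {a, b} F"
  show "(u, v) \<notin> reach (add_mset {a, b} F - {#{u, v}#})"
  proof (cases "{u, v} = {a, b}")
    case True
    moreover have "(b, a) \<notin> reach F"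
      using bridge reach_sym[of b a F] by blast
    ultimately show ?thesis
      using bridge by (auto simp: doubleton_eq_iff insert_commute)
  next
    case False
    let ?F' = "F - {#{u, v}#}"
    have "{u, v} \<in># F"
      using uv False by simp
    then have F: "(u, v) \<notin> reach ?F'" "(u, v) \<in> reach F"
      using forest by (auto simp: is_forest_def reach_edge)
    have sub: "\<And>p q. (p, q) \<in> reach ?F' \<Longrightarrow> (p, q) \<in> reach F"
      by (rule reach_mono[of ?F' F]) simp_all
    have "(u, v) \<notin> reach (add_mset {a, b} ?F')"
    proof
      assume "(u, v) \<in> reach (add_mset {a, b} ?F')"
      then consider "(u, a) \<in> reach ?F'" "(b, v) \<in> reach ?F'" | "(u, b) \<in> reach ?F'" "(a, v) \<in> reach ?F'"
        using F(1) unfolding reach_add_edge_iff by blast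
      then have "(a, b) \<in> reach F"
        by cases (meson sub F(2) reach_sym rtrancl_trans)+
      with bridge show False ..
    qed
    then show ?thesis
      using \<open>{u, v} \<in># F\<close> by (simp add: diff_union_swap2)
  qed
qed

lemma is_forest_add_edge_iff:
  "is_forest (add_mset {a, b} F) \<longleftrightarrow> is_forest F \<and> (a, b) \<notin> reach F"
proof
  assume forest: "is_forest (add_mset {a, b} F)"
  have "is_forest F"
    using forest by (rule is_forest_submset) simp
  moreover have "{a, b} \<in># add_mset {a, b} F"
    by simp
  with forest have "(a, b) \<notin> reach (add_mset {a, b} F - {#{a, b}#})"
    unfolding is_forest_def by blast
  ultimately show "is_forest F \<and> (a, b) \<notin> reach F"
    by simp
qed (simp add: is_forest_add_bridge)

text \<open>Each edge of a forest joins two components of the rest of it.\<close>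

lemma forest_size_plus_num_comps:
  assumes "finite V" "edges_in V F" "is_forest F"
  shows "size F + num_comps V F = card V"
  using assms(2,3)
proof (induction F)
  case (add e F)
  then obtain a b where ab: "a \<in> V" "b \<in> V" "e = {a, b}"
    by auto
  then have "is_forest F" and bridge: "(a, b) \<notin> reach F"
    using add.prems(2) by (simp_all add: is_forest_add_edge_iff)
  have "num_comps V (add_mset {a, b} F) + 1 = num_comps V F"
    by (rule num_comps_add_bridge[OF assms(1) ab(1,2) bridge])
  then show ?case
    using add.IH add.prems \<open>is_forest F\<close> ab by simp
qed (simp add: num_comps_no_edges assms(1))

lemma spanning_tree_is_forest:
  assumes "spanning_tree V E T"
  shows "is_forest T"
  unfolding is_forest_def
proof (intro allI impI notI)
  fix a b assume ab: "{a, b} \<in># T" "(a, b) \<in> reach (T - {#{a, b}#})"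
  then have "reach (T - {#{a, b}#}) = reach T"
    by (metis reach_add_reached_edge insert_DiffM)
  then have "connected_mg V (T - {#{a, b}#})"
    using assms by (simp add: spanning_tree_def connected_mg_def)
  then show False
    using assms ab(1) by (simp add: spanning_tree_def)
qed

lemma spanning_tree_size:
  assumes "finite V" "edges_in V E" "spanning_tree V E T"
  shows "size T + 1 = card V"
proof -
  have "edges_in V T" "num_comps V T = 1"
    using assms edges_in_submset connected_mg_iff_num_comps[OF assms(1)]
    by (auto simp: spanning_tree_def)
  then show ?thesis
    using forest_size_plus_num_comps[OF assms(1) _ spanning_tree_is_forest[OF assms(3)]] by simp
qed

lemma spanning_treeI:
  assumes "finite V" "edges_in V T" "T \<subseteq># E" "connected_mg V T" "size T + 1 = card V"
  shows "spanning_tree V E T"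
  unfolding spanning_tree_def
proof (intro conjI ballI notI assms(3,4))
  fix x assume x: "x \<in># T" and conn: "connected_mg V (T - {#x#})"
  have "edges_in V (T - {#x#})"
    using assms(2) by (rule edges_in_submset) simp
  then have "card V \<le> size (T - {#x#}) + 1"
    using card_le_size_plus_num_comps[OF assms(1)] conn connected_mg_iff_num_comps[OF assms(1)]
    by fastforce
  moreover have "size T > 0"
    using x nonempty_has_size by fastforce
  ultimately show False
    using assms(5) x by (simp add: size_Diff_submset)
qed

section \<open>Nash-Williams' covering theorem\<close>

lemma submset_sum_split:
  fixes T :: "nat \<Rightarrow> 'b multiset"
  shows "E \<subseteq># (\<Sum>i<k. T i) \<Longrightarrow> \<exists>F. (\<forall>i<k. F i \<subseteq># T i) \<and> E = (\<Sum>i<k. F i)"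
proof (induction k arbitrary: E)
  case (Suc k)
  have "E - T k \<subseteq># (\<Sum>i<k. T i)"
    using Suc.prems by (simp add: subset_eq_diff_conv add.commute)
  then obtain F where F: "\<forall>i<k. F i \<subseteq># T i" "E - T k = (\<Sum>i<k. F i)"
    using Suc.IH by blast
  let ?F = "F(k := E \<inter># T k)"
  have "\<forall>i<Suc k. ?F i \<subseteq># T i"
    using F(1) by (auto simp: less_Suc_eq)
  moreover have "E = (E - T k) + (E \<inter># T k)"
    by (simp add: multiset_eq_iff min_def)
  then have "E = (\<Sum>i<Suc k. ?F i)"
    using F(2) by simp
  ultimately show ?case
    by blast
qed simp

lemma summand_submset_sum:
  fixes T :: "nat \<Rightarrow> 'b multiset"
  assumes "i < k"
  shows "T i \<subseteq># (\<Sum>i<k. T i)"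
proof -
  have "(\<Sum>i<k. T i) = T i + (\<Sum>j\<in>{..<k} - {i}. T j)"
    using assms by (intro sum.remove) auto
  then show ?thesis
    by simp
qed

text \<open>The easy half of the Nash-Williams covering theorem: each forest contributes at most
  \<open>|V| - \<omega>(E)\<close> edges to \<open>E\<close>.\<close>

lemma size_le_forest_cover:
  assumes fin: "finite V" and E: "edges_in V E" "E \<subseteq># (\<Sum>i<k. T i)"
    and forests: "\<forall>i<k. is_forest (T i)"
  shows "size E \<le> k * (card V - num_comps V E)"
proof -
  obtain F where F: "\<forall>i<k. F i \<subseteq># T i" "E = (\<Sum>i<k. F i)"
    using submset_sum_split[OF E(2)] by blast
  have "size (F i) \<le> card V - num_comps V E" if "i < k" for i
  proof -
    have FE: "F i \<subseteq># E"
      using F(2) summand_submset_sum[OF that] by simp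
    have "size (F i) + num_comps V (F i) = card V"
      using forest_size_plus_num_comps[OF fin edges_in_submset[OF E(1) FE]] forests F(1) that
        is_forest_submset by blast
    moreover have "num_comps V E \<le> num_comps V (F i)"
      by (rule num_comps_antimono[OF fin E(1) FE])
    ultimately show ?thesis
      by simp
  qed
  then have "(\<Sum>i<k. size (F i)) \<le> k * (card V - num_comps V E)"
    using sum_bounded_above[of "{..<k}" "\<lambda>i. size (F i)"] by simp
  then show ?thesis
    using F(2) by (simp add: size_multiset_sum)
qed

text \<open>In the paper's notation, \<open>sparse k V E\<close> means \<open>\<gamma>(G) \<le> k\<close>.\<close>

definition sparse :: "nat \<Rightarrow> 'a set \<Rightarrow> 'a set multiset \<Rightarrow> bool" where
  "sparse k V E \<longleftrightarrow> (\<forall>V' E'. V' \<subseteq> V \<longrightarrow> edges_in V' E' \<longrightarrow> E' \<subseteq># E \<longrightarrow>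
     size E' \<le> k * (card V' - num_comps V' E'))"

lemma sparseD:
  "sparse k V E \<Longrightarrow> edges_in V E \<Longrightarrow> F \<subseteq># E \<Longrightarrow> size F \<le> k * (card V - num_comps V F)"
  unfolding sparse_def by (meson edges_in_submset order_refl)

lemma sparse_subgraph: "sparse k V E \<Longrightarrow> W \<subseteq> V \<Longrightarrow> F \<subseteq># E \<Longrightarrow> sparse k W F"
  unfolding sparse_def by (meson order_trans subset_mset.order_trans)

lemma sparse_forest_cover:
  assumes "finite V" "\<forall>i<k. is_forest (T i)" "E \<subseteq># (\<Sum>i<k. T i)"
  shows "sparse k V E"
  unfolding sparse_def
proof (intro allI impI)
  fix V' E' assume "V' \<subseteq> V" "edges_in V' E'" "E' \<subseteq># E"
  then show "size E' \<le> k * (card V' - num_comps V' E')"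
    using size_le_forest_cover[of V' E' T k] assms finite_subset subset_mset.order_trans by blast
qed

text \<open>For the exchange argument the edges of a multigraph are made distinct by labels:
  \<open>g x\<close> is the edge carrying label \<open>x\<close>.\<close>

definition edges_of :: "('e \<Rightarrow> 'a set) \<Rightarrow> 'e set \<Rightarrow> 'a set multiset" where
  "edges_of g Y = image_mset g (mset_set Y)"

abbreviation reach_by :: "('e \<Rightarrow> 'a set) \<Rightarrow> 'e set \<Rightarrow> ('a \<times> 'a) set" where
  "reach_by g Y \<equiv> reach (edges_of g Y)"

definition spans :: "('e \<Rightarrow> 'a set) \<Rightarrow> 'e set \<Rightarrow> 'e \<Rightarrow> bool" where
  "spans g Y x \<longleftrightarrow> (\<exists>a b. g x = {a, b} \<and> (a, b) \<in> reach_by g Y)"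

definition edge_labels :: "('e \<Rightarrow> 'a set) \<Rightarrow> 'a set \<Rightarrow> 'e set \<Rightarrow> bool" where
  "edge_labels g V X \<longleftrightarrow> (\<forall>x\<in>X. \<exists>a\<in>V. \<exists>b\<in>V. a \<noteq> b \<and> g x = {a, b})"

lemma edges_of_insert: "finite Y \<Longrightarrow> y \<notin> Y \<Longrightarrow> edges_of g (insert y Y) = add_mset (g y) (edges_of g Y)"
  by (simp add: edges_of_def)

lemma edges_of_remove: "finite Y \<Longrightarrow> y \<in> Y \<Longrightarrow> edges_of g (Y - {y}) = edges_of g Y - {#g y#}"
  by (metis edges_of_insert finite_Diff insert_Diff Diff_iff singletonI add_mset_remove_trivial)

lemma edges_of_mono: "Y \<subseteq> Z \<Longrightarrow> finite Z \<Longrightarrow> edges_of g Y \<subseteq># edges_of g Z"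
  unfolding edges_of_def by (intro image_mset_subseteq_mono subset_imp_msubset_mset_set)

lemma reach_by_mono: "Y \<subseteq> Z \<Longrightarrow> finite Z \<Longrightarrow> (u, v) \<in> reach_by g Y \<Longrightarrow> (u, v) \<in> reach_by g Z"
  by (rule reach_mono[OF edges_of_mono])

lemma size_edges_of: "size (edges_of g Y) = card Y"
  by (simp add: edges_of_def)

lemma mem_edges_of: "finite Y \<Longrightarrow> e \<in># edges_of g Y \<longleftrightarrow> (\<exists>y\<in>Y. e = g y)"
  by (auto simp: edges_of_def)

lemma edges_in_edges_of: "edge_labels g V X \<Longrightarrow> Y \<subseteq> X \<Longrightarrow> finite Y \<Longrightarrow> edges_in V (edges_of g Y)"
  unfolding edge_labels_def edges_in_def by (auto simp: mem_edges_of subset_iff)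

lemma edge_labelsE:
  assumes "edge_labels g V X" "x \<in> X"
  obtains a b where "g x = {a, b}"
  using assms by (auto simp: edge_labels_def)

lemma spans_iff: "g x = {a, b} \<Longrightarrow> spans g Y x \<longleftrightarrow> (a, b) \<in> reach_by g Y"
  unfolding spans_def by (metis doubleton_eq_iff reach_sym)

lemma spans_mono: "spans g Y x \<Longrightarrow> Y \<subseteq> Z \<Longrightarrow> finite Z \<Longrightarrow> spans g Z x"
  unfolding spans_def by (meson reach_by_mono)

lemma spans_member: "finite Y \<Longrightarrow> x \<in> Y \<Longrightarrow> g x = {a, b} \<Longrightarrow> spans g Y x"
  unfolding spans_def by (metis mem_edges_of reach_edge)

lemma reach_by_insert_iff:
  assumes "finite Y" "y \<notin> Y" "g y = {a, b}"
  shows "(p, q) \<in> reach_by g (insert y Y) \<longleftrightarrow> (p, q) \<in> reach_by g Y \<or>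
    ((p, a) \<in> reach_by g Y \<and> (b, q) \<in> reach_by g Y) \<or> ((p, b) \<in> reach_by g Y \<and> (a, q) \<in> reach_by g Y)"
  using assms by (simp add: edges_of_insert reach_add_edge_iff)

lemma is_forest_edges_of_insert:
  assumes "finite Y" "y \<notin> Y" "is_forest (edges_of g Y)" "\<not> spans g Y y" "g y = {a, b}"
  shows "is_forest (edges_of g (insert y Y))"
  using assms by (simp add: edges_of_insert is_forest_add_edge_iff spans_iff)

lemma forest_member_not_spanned:
  assumes "finite Y" "is_forest (edges_of g Y)" "y \<in> Y"
  shows "\<not> spans g (Y - {y}) y"
proof
  assume "spans g (Y - {y}) y"
  then obtain a b where ab: "g y = {a, b}" "(a, b) \<in> reach_by g (Y - {y})"
    by (auto simp: spans_def)
  moreover have "{a, b} \<in># edges_of g Y"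
    using ab(1) assms by (auto simp: mem_edges_of)
  ultimately show False
    using assms by (simp add: is_forest_def edges_of_remove)
qed

text \<open>Otherwise the two edges would lie on a common cycle of the forest.\<close>

lemma forest_reach_remove_two:
  assumes fin: "finite F" and forest: "is_forest (edges_of g F)" and yF: "y \<in> F" "y' \<in> F" "y \<noteq> y'"
    and gy: "g y = {a, b}" "g y' = {a', b'}"
    and reach: "(u, v) \<in> reach_by g (F - {y})" "(u, v) \<in> reach_by g (F - {y'})"
  shows "(u, v) \<in> reach_by g (F - {y} - {y'})"
proof (rule ccontr)
  define G where "G = F - {y} - {y'}"
  assume "(u, v) \<notin> reach_by g (F - {y} - {y'})"
  then have notG: "(u, v) \<notin> reach_by g G"
    by (simp add: G_def)
  have finG: "finite G" and notin: "y \<notin> G" "y' \<notin> G"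
    using fin by (auto simp: G_def)
  have F: "F - {y'} = insert y G" "F - {y} = insert y' G"
    using yF by (auto simp: G_def)
  let ?G' = "insert y' G"
  have up: "\<And>p q. (p, q) \<in> reach_by g G \<Longrightarrow> (p, q) \<in> reach_by g ?G'"
    by (meson reach_by_mono subset_insertI finite_insert finG)
  have y': "(a', b') \<in> reach_by g ?G'" "(b', a') \<in> reach_by g ?G'"
    using spans_member[of ?G' y' g a' b'] finG gy(2) spans_iff[of g y' a' b'] spans_iff[of g y' b' a']
    by (auto simp: insert_commute)
  from reach(2) have "((u, a) \<in> reach_by g G \<and> (b, v) \<in> reach_by g G) \<or>
      ((u, b) \<in> reach_by g G \<and> (a, v) \<in> reach_by g G)"
    using reach_by_insert_iff[of G y g a b u v, OF finG notin(1) gy(1)] notG by (simp add: F)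
  moreover from reach(1) have "((u, a') \<in> reach_by g G \<and> (b', v) \<in> reach_by g G) \<or>
      ((u, b') \<in> reach_by g G \<and> (a', v) \<in> reach_by g G)"
    using reach_by_insert_iff[of G y' g a' b' u v, OF finG notin(2) gy(2)] notG by (simp add: F)
  ultimately have "(a, b) \<in> reach_by g ?G'"
    using y' by (elim disjE conjE) (meson up reach_sym rtrancl_trans)+
  then have "spans g (F - {y}) y"
    using gy(1) by (simp add: spans_iff F)
  then show False
    using forest_member_not_spanned[OF fin forest yF(1)] by simp
qed

text \<open>The separating edges are those of the path between \<open>u\<close> and \<open>v\<close>.\<close>

lemma reach_by_separating_edges:
  assumes "finite F" "is_forest (edges_of g F)" "edge_labels g V F" "(u, v) \<in> reach_by g F"
  shows "(u, v) \<in> reach_by g {y \<in> F. (u, v) \<notin> reach_by g (F - {y})}"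
  using assms
proof (induction "card F" arbitrary: F rule: less_induct)
  case less
  show ?case
  proof (cases "\<forall>y\<in>F. (u, v) \<notin> reach_by g (F - {y})")
    case True
    then have "{y \<in> F. (u, v) \<notin> reach_by g (F - {y})} = F"
      by auto
    then show ?thesis
      using less.prems by simp
  next
    case False
    then obtain y where y: "y \<in> F" "(u, v) \<in> reach_by g (F - {y})"
      by auto
    have "(u, v) \<in> reach_by g {y' \<in> F - {y}. (u, v) \<notin> reach_by g (F - {y} - {y'})}"
    proof (rule less.hyps)
      show "card (F - {y}) < card F"
        by (rule card_Diff1_less[OF less.prems(1) y(1)])
      show "is_forest (edges_of g (F - {y}))"
        using less.prems(1,2) edges_of_mono[of "F - {y}" F g] is_forest_submset by blast
      show "edge_labels g V (F - {y})"
        using less.prems(3) by (auto simp: edge_labels_def)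
    qed (use less.prems(1) y(2) in simp_all)
    moreover have "{y' \<in> F - {y}. (u, v) \<notin> reach_by g (F - {y} - {y'})}
        \<subseteq> {y \<in> F. (u, v) \<notin> reach_by g (F - {y})}"
    proof safe
      fix y' assume y': "y' \<in> F" "y' \<noteq> y" and sep: "(u, v) \<notin> reach_by g (F - {y} - {y'})"
      obtain a b a' b' where "g y = {a, b}" "g y' = {a', b'}"
        using less.prems(3) y(1) y'(1) by (meson edge_labelsE)
      then show "(u, v) \<in> reach_by g (F - {y'}) \<Longrightarrow> False"
        using forest_reach_remove_two[OF less.prems(1,2) y(1) y'(1)] y'(2) y(2) sep by metis
    qed
    moreover have "finite {y \<in> F. (u, v) \<notin> reach_by g (F - {y})}"
      using less.prems(1) by simp
    ultimately show ?thesis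
      by (meson reach_by_mono)
  qed
qed

definition forest_colouring :: "('e \<Rightarrow> 'a set) \<Rightarrow> nat \<Rightarrow> 'e set \<Rightarrow> ('e \<Rightarrow> nat) \<Rightarrow> bool" where
  "forest_colouring g k X c \<longleftrightarrow> (\<forall>x\<in>X. c x < k) \<and> (\<forall>i<k. is_forest (edges_of g {x \<in> X. c x = i}))"

text \<open>Edmonds' augmenting chains for the union of \<open>k\<close> graphic matroids. Given a forest
  colouring \<open>c\<close> of \<open>X0\<close>, a chain for the new label \<open>e\<close> is a sequence \<open>e = f 0, f 1, \<dots>, f m\<close>
  with colours \<open>ix j\<close> such that \<open>f j\<close> may replace \<open>f (Suc j)\<close> in class \<open>ix j\<close>
  (\<open>f (Suc j)\<close> lies on the path of that class between the ends of \<open>f j\<close>), and \<open>f m\<close> may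
  simply be added to class \<open>ix m\<close>.\<close>

locale forest_augmentation =
  fixes g :: "'e \<Rightarrow> 'a set" and V :: "'a set" and k :: nat and X0 :: "'e set" and e :: 'e
  assumes finite_X0: "finite X0" and new: "e \<notin> X0" and labels: "edge_labels g V (insert e X0)"
begin

definition colour_class :: "('e \<Rightarrow> nat) \<Rightarrow> nat \<Rightarrow> 'e set" where
  "colour_class c i = {x \<in> X0. c x = i}"

definition swap_step :: "('e \<Rightarrow> nat) \<Rightarrow> (nat \<Rightarrow> 'e) \<Rightarrow> (nat \<Rightarrow> nat) \<Rightarrow> nat \<Rightarrow> bool" where
  "swap_step c f ix j \<longleftrightarrow> ix j < k \<and> f (Suc j) \<in> X0 \<and> c (f (Suc j)) = ix j \<and>
     (0 < j \<longrightarrow> c (f j) \<noteq> ix j) \<and> spans g (colour_class c (ix j)) (f j) \<and>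
     \<not> spans g (colour_class c (ix j) - {f (Suc j)}) (f j)"

definition swap_path :: "('e \<Rightarrow> nat) \<Rightarrow> (nat \<Rightarrow> 'e) \<Rightarrow> (nat \<Rightarrow> nat) \<Rightarrow> nat \<Rightarrow> bool" where
  "swap_path c f ix m \<longleftrightarrow> f 0 = e \<and> (\<forall>j<m. swap_step c f ix j)"

definition free_end :: "('e \<Rightarrow> nat) \<Rightarrow> (nat \<Rightarrow> 'e) \<Rightarrow> (nat \<Rightarrow> nat) \<Rightarrow> nat \<Rightarrow> bool" where
  "free_end c f ix m \<longleftrightarrow> ix m < k \<and> (0 < m \<longrightarrow> c (f m) \<noteq> ix m) \<and> \<not> spans g (colour_class c (ix m)) (f m)"

definition aug_chain :: "('e \<Rightarrow> nat) \<Rightarrow> (nat \<Rightarrow> 'e) \<Rightarrow> (nat \<Rightarrow> nat) \<Rightarrow> nat \<Rightarrow> bool" where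
  "aug_chain c f ix m \<longleftrightarrow> swap_path c f ix m \<and> free_end c f ix m"

lemma swap_path_Suc: "swap_path c f ix (Suc m) \<longleftrightarrow> swap_path c f ix m \<and> swap_step c f ix m"
  by (auto simp: swap_path_def less_Suc_eq)

lemma swap_path_prefix:
  assumes "swap_path c f ix m" "j \<le> m" "\<forall>j'\<le>j. f' j' = f j'" "\<forall>j'<j. ix' j' = ix j'"
  shows "swap_path c f' ix' j"
  using assms by (simp add: swap_path_def swap_step_def)

lemma swap_path_mem:
  assumes "swap_path c f ix m" "j \<le> m"
  shows "f j \<in> insert e X0"
  using assms by (cases j) (auto simp: swap_path_def swap_step_def)

lemma swap_path_mem_pos:
  assumes "swap_path c f ix m" "0 < j" "j \<le> m"
  shows "f j \<in> X0"
  using assms by (cases j) (auto simp: swap_path_def swap_step_def)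

lemma colour_class_update:
  "z \<in> X0 \<Longrightarrow> colour_class (c(z := i')) i =
    (if i = i' then insert z (colour_class c i) else colour_class c i - {z})"
  by (auto simp: colour_class_def)

lemma finite_colour_class: "finite (colour_class c i)"
  using finite_X0 by (simp add: colour_class_def)

lemma forest_colour_class: "forest_colouring g k X0 c \<Longrightarrow> i < k \<Longrightarrow> is_forest (edges_of g (colour_class c i))"
  by (simp add: forest_colouring_def colour_class_def)

lemma aug_chain_0_extends:
  assumes good: "forest_colouring g k X0 c" and chain: "aug_chain c f ix 0"
  shows "forest_colouring g k (insert e X0) (c(e := ix 0))"
proof -
  have "f 0 = e"
    using chain by (simp add: aug_chain_def swap_path_def)
  then have ik: "ix 0 < k" and free: "\<not> spans g (colour_class c (ix 0)) e"
    using chain by (auto simp: aug_chain_def free_end_def)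
  obtain a b where "g e = {a, b}"
    using labels by (meson edge_labelsE insertI1)
  then have "is_forest (edges_of g (insert e (colour_class c (ix 0))))"
    using is_forest_edges_of_insert[OF finite_colour_class _ forest_colour_class[OF good ik] free] new
    by (simp add: colour_class_def)
  moreover have "{x \<in> insert e X0. (c(e := ix 0)) x = i} =
      (if i = ix 0 then insert e (colour_class c i) else colour_class c i)" for i
    using new by (auto simp: colour_class_def)
  ultimately show ?thesis
    using good ik new by (auto simp: forest_colouring_def colour_class_def)
qed

context
  fixes c :: "'e \<Rightarrow> nat" and f :: "nat \<Rightarrow> 'e" and ix :: "nat \<Rightarrow> nat" and n :: nat
  assumes good: "forest_colouring g k X0 c"
    and chain: "aug_chain c f ix (Suc n)"
    and shortest: "\<forall>m < Suc n. \<forall>f' ix'. \<not> aug_chain c f' ix' m"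
begin

lemma shortest_chain_steps: "j \<le> n \<Longrightarrow> swap_step c f ix j"
  using chain by (simp add: aug_chain_def swap_path_def)

lemma shortest_chain_last:
  "f (Suc n) \<in> X0" "c (f (Suc n)) = ix n" "ix n < k" "ix (Suc n) < k"
  "c (f (Suc n)) \<noteq> ix (Suc n)" "\<not> spans g (colour_class c (ix (Suc n))) (f (Suc n))"
  using shortest_chain_steps[of n] chain by (auto simp: swap_step_def aug_chain_def free_end_def)

lemma shortest_chain_distinct:
  assumes "0 < j" "j \<le> n"
  shows "f j \<noteq> f (Suc n)"
proof
  assume "f j = f (Suc n)"
  then have "aug_chain c f (ix(j := ix (Suc n))) j"
    using chain assms shortest_chain_last
    by (auto simp: aug_chain_def free_end_def intro: swap_path_prefix)
  then show False
    using shortest assms by auto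
qed

text \<open>Otherwise the chain could jump from \<open>f j\<close> straight to \<open>f (Suc n)\<close> and be shortened.\<close>

lemma shortest_chain_no_shortcut:
  assumes j: "j < n" "ix j = ix n"
  shows "spans g (colour_class c (ix n) - {f (Suc n)}) (f j)"
proof (rule ccontr)
  assume shortcut: "\<not> spans g (colour_class c (ix n) - {f (Suc n)}) (f j)"
  let ?f = "f(Suc j := f (Suc n))" and ?ix = "ix(Suc j := ix (Suc n))"
  have "swap_path c ?f ?ix j"
    using chain j by (auto simp: aug_chain_def intro: swap_path_prefix)
  moreover have "swap_step c ?f ?ix j"
    using shortest_chain_steps[of j] j shortcut shortest_chain_last by (auto simp: swap_step_def)
  ultimately have "aug_chain c ?f ?ix (Suc j)"
    using shortest_chain_last by (simp add: aug_chain_def swap_path_Suc free_end_def)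
  then show False
    using shortest j by auto
qed

lemma shortest_chain_keeps_separation:
  assumes j: "j < n" "ix j = ix (Suc n)"
  shows "\<not> spans g (insert (f (Suc n)) (colour_class c (ix (Suc n))) - {f (Suc j)}) (f j)"
proof
  define z where "z = f (Suc n)"
  define W where "W = colour_class c (ix (Suc n)) - {f (Suc j)}"
  assume "spans g (insert (f (Suc n)) (colour_class c (ix (Suc n))) - {f (Suc j)}) (f j)"
  moreover have step: "swap_step c f ix j"
    using shortest_chain_steps j by simp
  then have "z \<noteq> f (Suc j)"
    using j shortest_chain_last by (auto simp: swap_step_def z_def)
  ultimately have "spans g (insert z W) (f j)"
    by (simp add: W_def z_def insert_Diff_if)
  have "z \<notin> W" "finite W"
    using shortest_chain_last finite_colour_class by (auto simp: W_def z_def colour_class_def)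
  obtain za zb where gz: "g z = {za, zb}"
    using labels shortest_chain_last(1) unfolding z_def by (meson edge_labelsE insertI2)
  obtain p q where gfj: "g (f j) = {p, q}"
    using labels swap_path_mem chain j by (meson aug_chain_def edge_labelsE less_imp_le_nat le_SucI)
  have sub: "\<And>u v. (u, v) \<in> reach_by g W \<Longrightarrow> (u, v) \<in> reach_by g (colour_class c (ix (Suc n)))"
    using reach_by_mono[of W "colour_class c (ix (Suc n))" _ _ g] finite_colour_class
    by (auto simp: W_def)
  have "(p, q) \<in> reach_by g (insert z W)" "(p, q) \<notin> reach_by g W"
    "(p, q) \<in> reach_by g (colour_class c (ix (Suc n)))"
    using \<open>spans g (insert z W) (f j)\<close> step j gfj by (auto simp: spans_iff swap_step_def W_def)
  then have "(za, zb) \<in> reach_by g (colour_class c (ix (Suc n)))"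
    using reach_by_insert_iff[of W z g za zb p q, OF \<open>finite W\<close> \<open>z \<notin> W\<close> gz]
    by (metis sub reach_sym rtrancl_trans)
  then show False
    using shortest_chain_last(6) gz by (simp add: spans_iff z_def)
qed


lemma shortest_chain_recolour_good: "forest_colouring g k X0 (c(f (Suc n) := ix (Suc n)))"
  unfolding forest_colouring_def
proof (intro conjI ballI allI impI)
  fix x assume "x \<in> X0"
  then show "(c(f (Suc n) := ix (Suc n))) x < k"
    using good shortest_chain_last by (auto simp: forest_colouring_def)
next
  fix i assume "i < k"
  have z: "f (Suc n) \<notin> colour_class c (ix (Suc n))"
    using shortest_chain_last by (simp add: colour_class_def)
  obtain a b where "g (f (Suc n)) = {a, b}"
    using labels shortest_chain_last(1) by (meson edge_labelsE insertI2)
  have "is_forest (edges_of g (colour_class (c(f (Suc n) := ix (Suc n))) i))"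
  proof (cases "i = ix (Suc n)")
    case True
    then show ?thesis
      using colour_class_update[OF shortest_chain_last(1)] shortest_chain_last(4,6)
        is_forest_edges_of_insert[OF finite_colour_class z forest_colour_class[OF good] _
          \<open>g (f (Suc n)) = {a, b}\<close>]
      by simp
  next
    case False
    then show ?thesis
      using colour_class_update[OF shortest_chain_last(1)] forest_colour_class[OF good \<open>i < k\<close>]
        is_forest_submset edges_of_mono[OF _ finite_colour_class]
      by (metis Diff_subset)
  qed
  then show "is_forest (edges_of g {x \<in> X0. (c(f (Suc n) := ix (Suc n))) x = i})"
    by (simp add: colour_class_def)
qed

lemma shortest_chain_recolour_step:
  assumes j: "j < n"
  shows "swap_step (c(f (Suc n) := ix (Suc n))) f ix j"
proof -
  let ?c = "c(f (Suc n) := ix (Suc n))"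
  have step: "swap_step c f ix j"
    using shortest_chain_steps j by simp
  have distinct: "f (Suc j) \<noteq> f (Suc n)" "0 < j \<Longrightarrow> f j \<noteq> f (Suc n)"
    using shortest_chain_distinct j by auto
  have recoloured: "colour_class ?c (ix j) =
      (if ix j = ix (Suc n) then insert (f (Suc n)) (colour_class c (ix j))
       else colour_class c (ix j) - {f (Suc n)})"
    by (rule colour_class_update[OF shortest_chain_last(1)])
  have "spans g (colour_class ?c (ix j)) (f j) \<and> \<not> spans g (colour_class ?c (ix j) - {f (Suc j)}) (f j)"
  proof (cases "ix j = ix (Suc n)")
    case True
    have "spans g (insert (f (Suc n)) (colour_class c (ix j))) (f j)"
      using step spans_mono[of g "colour_class c (ix j)" "f j" "insert (f (Suc n)) (colour_class c (ix j))"]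
        finite_colour_class by (auto simp: swap_step_def)
    then show ?thesis
      using recoloured True shortest_chain_keeps_separation[OF j True] by simp
  next
    case False
    have "spans g (colour_class c (ix j) - {f (Suc n)}) (f j)"
    proof (cases "ix j = ix n")
      case True
      then show ?thesis
        using shortest_chain_no_shortcut[OF j] by simp
    next
      case False
      then have "colour_class c (ix j) - {f (Suc n)} = colour_class c (ix j)"
        using shortest_chain_last by (auto simp: colour_class_def)
      then show ?thesis
        using step by (simp add: swap_step_def)
    qed
    moreover have "\<not> spans g (colour_class c (ix j) - {f (Suc n)} - {f (Suc j)}) (f j)"
      using step spans_mono[of g "colour_class c (ix j) - {f (Suc n)} - {f (Suc j)}" "f j"
          "colour_class c (ix j) - {f (Suc j)}"] finite_colour_class
      by (auto simp: swap_step_def)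
    ultimately show ?thesis
      using recoloured False by simp
  qed
  then show ?thesis
    using step distinct by (auto simp: swap_step_def)
qed

lemma shortest_chain_recolour_chain: "aug_chain (c(f (Suc n) := ix (Suc n))) f ix n"
proof -
  have "f 0 = e"
    using chain by (simp add: aug_chain_def swap_path_def)
  then have "swap_path (c(f (Suc n) := ix (Suc n))) f ix n"
    using shortest_chain_recolour_step by (simp add: swap_path_def)
  moreover have "0 < n \<Longrightarrow> (c(f (Suc n) := ix (Suc n))) (f n) \<noteq> ix n"
    using shortest_chain_distinct[of n] shortest_chain_steps[of n] by (simp add: swap_step_def)
  moreover have "colour_class (c(f (Suc n) := ix (Suc n))) (ix n) = colour_class c (ix n) - {f (Suc n)}"
    using colour_class_update[OF shortest_chain_last(1)] shortest_chain_last(2,5) by simp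
  ultimately show ?thesis
    using shortest_chain_last(3) shortest_chain_steps[of n]
    by (simp add: aug_chain_def free_end_def swap_step_def)
qed


end

lemma aug_chain_extends:
  "forest_colouring g k X0 c \<Longrightarrow> aug_chain c f ix m \<Longrightarrow> \<exists>c'. forest_colouring g k (insert e X0) c'"
proof (induction m arbitrary: c f ix rule: less_induct)
  case (less m)
  have "\<exists>m0. (\<exists>f ix. aug_chain c f ix m0) \<and> (\<forall>m' < m0. \<not> (\<exists>f ix. aug_chain c f ix m'))"
    using less.prems(2) exists_least_iff[of "\<lambda>m. \<exists>f ix. aug_chain c f ix m"] by blast
  then obtain m0 f0 ix0 where chain: "aug_chain c f0 ix0 m0"
    and shortest: "\<forall>m' < m0. \<forall>f' ix'. \<not> aug_chain c f' ix' m'"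
    by blast
  then have "m0 \<le> m"
    using less.prems(2) not_le by blast
  show ?case
  proof (cases m0)
    case 0
    then show ?thesis
      using aug_chain_0_extends[OF less.prems(1)] chain by blast
  next
    case (Suc n)
    let ?c = "c(f0 (Suc n) := ix0 (Suc n))"
    have "forest_colouring g k X0 ?c" "aug_chain ?c f0 ix0 n"
      using shortest_chain_recolour_good[OF less.prems(1)] shortest_chain_recolour_chain[OF less.prems(1)]
        chain shortest Suc by simp_all
    moreover have "n < m"
      using Suc \<open>m0 \<le> m\<close> by simp
    ultimately show ?thesis
      using less.IH by blast
  qed
qed

definition reached :: "('e \<Rightarrow> nat) \<Rightarrow> 'e set" where
  "reached c = {f m |f ix m. swap_path c f ix m}"

lemma reached_subset: "reached c \<subseteq> insert e X0"
  unfolding reached_def using swap_path_mem by blast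

lemma new_reached: "e \<in> reached c"
proof -
  have "swap_path c (\<lambda>_. e) (\<lambda>_. 0) 0"
    by (simp add: swap_path_def)
  then show ?thesis
    unfolding reached_def by (auto intro!: exI[of _ "\<lambda>_. e"] exI[of _ "0::nat"])
qed

lemma finite_reached: "finite (reached c)"
  using reached_subset finite_X0 finite_subset by blast

context
  fixes c :: "'e \<Rightarrow> nat"
  assumes good: "forest_colouring g k X0 c"
    and no_chain: "\<forall>m f ix. \<not> aug_chain c f ix m"
begin

lemma swap_path_end_colour:
  assumes "swap_path c f ix m" "f m = e \<or> c (f m) \<noteq> i" "0 < m"
  shows "c (f m) \<noteq> i"
  using assms swap_path_mem_pos[OF assms(1) assms(3)] new by auto

lemma no_chain_spans:
  assumes path: "swap_path c f ix m" and i: "i < k" "f m = e \<or> c (f m) \<noteq> i"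
  shows "spans g (colour_class c i) (f m)"
proof (rule ccontr)
  assume "\<not> spans g (colour_class c i) (f m)"
  then have "aug_chain c f (ix(m := i)) m"
    using swap_path_prefix[OF path] i swap_path_end_colour[OF path i(2)]
    by (simp add: aug_chain_def free_end_def)
  then show False
    using no_chain by blast
qed

lemma swap_path_extend:
  assumes path: "swap_path c f ix m" and i: "i < k" "f m = e \<or> c (f m) \<noteq> i"
    and y: "y \<in> colour_class c i" "\<not> spans g (colour_class c i - {y}) (f m)"
  shows "swap_path c (f(Suc m := y)) (ix(m := i)) (Suc m)"
proof -
  have "swap_path c (f(Suc m := y)) (ix(m := i)) m"
    by (rule swap_path_prefix[OF path]) auto
  moreover have "swap_step c (f(Suc m := y)) (ix(m := i)) m"
    using i y no_chain_spans[OF path i] swap_path_end_colour[OF path i(2)]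
    by (auto simp: swap_step_def colour_class_def)
  ultimately show ?thesis
    by (simp add: swap_path_Suc)
qed

text \<open>Every label on the path of class \<open>i\<close> between the ends of \<open>x\<close> extends the chain to \<open>x\<close>.\<close>

lemma reached_spanned:
  assumes x: "x \<in> reached c" and i: "i < k"
  shows "spans g (colour_class c i \<inter> reached c) x"
proof -
  obtain a b where gx: "g x = {a, b}"
    using labels x reached_subset by (meson edge_labelsE subsetD)
  show ?thesis
  proof (cases "x \<noteq> e \<and> c x = i")
    case True
    then have "x \<in> colour_class c i \<inter> reached c"
      using x reached_subset by (auto simp: colour_class_def)
    then show ?thesis
      using spans_member[of "colour_class c i \<inter> reached c" x g a b] gx finite_reached by blast
  next
    case False
    obtain f ix m where path: "swap_path c f ix m" and fm: "f m = x"
      using x by (auto simp: reached_def)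
    have end_ok: "f m = e \<or> c (f m) \<noteq> i"
      using False fm by auto
    let ?sep = "{y \<in> colour_class c i. (a, b) \<notin> reach_by g (colour_class c i - {y})}"
    have "(a, b) \<in> reach_by g (colour_class c i)"
      using no_chain_spans[OF path i end_ok] fm gx by (simp add: spans_iff)
    moreover have "edge_labels g V (colour_class c i)"
      using labels by (auto simp: edge_labels_def colour_class_def)
    ultimately have "(a, b) \<in> reach_by g ?sep"
      using reach_by_separating_edges[OF finite_colour_class forest_colour_class[OF good i]] by blast
    moreover have "?sep \<subseteq> colour_class c i \<inter> reached c"
    proof safe
      fix y assume "y \<in> colour_class c i" "(a, b) \<notin> reach_by g (colour_class c i - {y})"
      then have "swap_path c (f(Suc m := y)) (ix(m := i)) (Suc m)"
        using swap_path_extend[OF path i end_ok] fm gx by (simp add: spans_iff)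
      then show "y \<in> reached c"
        unfolding reached_def by (auto intro!: exI[of _ "f(Suc m := y)"] exI[of _ "Suc m"])
    qed
    ultimately have "(a, b) \<in> reach_by g (colour_class c i \<inter> reached c)"
      using reach_by_mono finite_reached by (meson finite_Int)
    then show ?thesis
      using gx by (simp add: spans_iff)
  qed
qed


lemma card_colour_class_reached:
  assumes "finite V" "i < k"
  shows "card (colour_class c i \<inter> reached c) = card V - num_comps V (edges_of g (reached c))"
proof -
  let ?R = "colour_class c i \<inter> reached c"
  have sub: "?R \<subseteq> reached c"
    by blast
  have "is_forest (edges_of g ?R)"
    using forest_colour_class[OF good assms(2)] is_forest_submset edges_of_mono[OF _ finite_colour_class]
    by (metis inf_le1)
  moreover have "edges_in V (edges_of g ?R)"
    using edges_in_edges_of[OF labels] reached_subset finite_reached by (meson finite_Int order_trans sub)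
  ultimately have count: "size (edges_of g ?R) + num_comps V (edges_of g ?R) = card V"
    by (rule forest_size_plus_num_comps[OF assms(1), rotated])
  have "adj (edges_of g (reached c)) \<subseteq> reach_by g ?R"
  proof safe
    fix p q assume "(p, q) \<in> adj (edges_of g (reached c))"
    then obtain x where "x \<in> reached c" "g x = {p, q}"
      using finite_reached by (auto simp: adj_def mem_edges_of)
    then show "(p, q) \<in> reach_by g ?R"
      using reached_spanned[OF _ assms(2)] spans_iff by metis
  qed
  then have "reach_by g (reached c) \<subseteq> reach_by g ?R"
    by (rule rtrancl_subset_rtrancl)
  moreover have "reach_by g ?R \<subseteq> reach_by g (reached c)"
    by (rule rtrancl_mono[OF adj_mono[OF edges_of_mono[OF sub finite_reached]]])
  ultimately have "reach_by g (reached c) = reach_by g ?R"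
    by (rule equalityI)
  then have "num_comps V (edges_of g ?R) = num_comps V (edges_of g (reached c))"
    by (simp add: num_comps_def comp_rel_def)
  with count show ?thesis
    by (simp add: size_edges_of)
qed

text \<open>Apart from \<open>e\<close>, the reached labels are split among \<open>k\<close> classes of equal rank.\<close>

lemma card_reached:
  assumes "finite V"
  shows "card (reached c) = k * (card V - num_comps V (edges_of g (reached c))) + 1"
proof -
  have "reached c - {e} = (\<Union>i<k. colour_class c i \<inter> reached c)"
    using good reached_subset new by (auto simp: forest_colouring_def colour_class_def)
  moreover have "card (\<Union>i<k. colour_class c i \<inter> reached c) = (\<Sum>i<k. card (colour_class c i \<inter> reached c))"
    using finite_reached by (intro card_UN_disjoint) (auto simp: colour_class_def)
  ultimately have "card (reached c - {e}) = (\<Sum>i<k. card (colour_class c i \<inter> reached c))"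
    by simp
  moreover have "0 < card (reached c)"
    using new_reached finite_reached card_gt_0_iff by blast
  ultimately show ?thesis
    using card_colour_class_reached[OF assms] new_reached finite_reached by simp
qed

end


lemma forest_colouring_insert:
  assumes "finite V"
    and bound: "\<forall>Y \<subseteq> insert e X0. card Y \<le> k * (card V - num_comps V (edges_of g Y))"
    and good: "forest_colouring g k X0 c"
  shows "\<exists>c'. forest_colouring g k (insert e X0) c'"
proof (rule ccontr)
  assume "\<nexists>c'. forest_colouring g k (insert e X0) c'"
  then have "\<forall>m f ix. \<not> aug_chain c f ix m"
    using aug_chain_extends[OF good] by blast
  then have "card (reached c) = k * (card V - num_comps V (edges_of g (reached c))) + 1"
    by (rule card_reached[OF good _ \<open>finite V\<close>])
  moreover have "card (reached c) \<le> k * (card V - num_comps V (edges_of g (reached c)))"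
    using bound reached_subset by blast
  ultimately show False
    by simp
qed

end

text \<open>The hard half of the Nash-Williams covering theorem, for labelled edges.\<close>

lemma forest_colouring_exists:
  assumes "finite X" "finite V" "edge_labels g V X"
    and "\<forall>Y \<subseteq> X. card Y \<le> k * (card V - num_comps V (edges_of g Y))"
  shows "\<exists>c. forest_colouring g k X c"
  using assms(1,3,4)
proof (induction X rule: finite_induct)
  case empty
  show ?case
    by (simp add: forest_colouring_def edges_of_def is_forest_def)
next
  case (insert e X0)
  interpret forest_augmentation g V k X0 e
    using insert.hyps insert.prems(1) by unfold_locales
  have "edge_labels g V X0" "\<forall>Y \<subseteq> X0. card Y \<le> k * (card V - num_comps V (edges_of g Y))"
    using insert.prems by (auto simp: edge_labels_def)
  then have "\<exists>c. forest_colouring g k X0 c"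
    by (rule insert.IH)
  then show ?case
    using forest_colouring_insert[OF assms(2) insert.prems(2)] by blast
qed

lemma edges_of_nth: "edges_of (nth xs) {..<length xs} = mset xs"
proof -
  have "mset xs = mset (map (nth xs) [0..<length xs])"
    by (simp add: map_nth)
  then show ?thesis
    by (simp add: edges_of_def atLeast0LessThan)
qed

lemma edges_of_colour_classes:
  fixes c :: "'e \<Rightarrow> nat"
  assumes "finite X"
  shows "(\<Sum>i<n. edges_of g {x \<in> X. c x = i}) = edges_of g {x \<in> X. c x < n}"
proof (induction n)
  case (Suc n)
  have "{x \<in> X. c x < Suc n} = {x \<in> X. c x < n} \<union> {x \<in> X. c x = n}"
    by auto
  moreover have "edges_of g ({x \<in> X. c x < n} \<union> {x \<in> X. c x = n}) =
      edges_of g {x \<in> X. c x < n} + edges_of g {x \<in> X. c x = n}"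
    unfolding edges_of_def using assms by (subst mset_set_Union) auto
  ultimately show ?case
    using Suc by simp
qed (simp add: edges_of_def)

theorem forest_decomposition:
  assumes "finite V" "edges_in V E"
    and "\<forall>F. F \<subseteq># E \<longrightarrow> size F \<le> k * (card V - num_comps V F)"
  shows "\<exists>T. (\<forall>i<k. is_forest (T i)) \<and> (\<Sum>i<k. T i) = E"
proof -
  obtain xs where xs: "mset xs = E"
    using ex_mset by blast
  let ?X = "{..<length xs}"
  have "edge_labels (nth xs) V ?X"
    using assms(2) xs by (auto simp: edge_labels_def edges_in_def)
  moreover have "\<forall>Y \<subseteq> ?X. card Y \<le> k * (card V - num_comps V (edges_of (nth xs) Y))"
    using assms(3) edges_of_mono[of _ ?X "nth xs"] edges_of_nth[of xs] xs
    by (metis finite_lessThan size_edges_of)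
  ultimately obtain c where c: "forest_colouring (nth xs) k ?X c"
    using forest_colouring_exists[OF _ assms(1)] by blast
  define T where "T i = edges_of (nth xs) {x \<in> ?X. c x = i}" for i
  have "(\<Sum>i<k. T i) = edges_of (nth xs) {x \<in> ?X. c x < k}"
    unfolding T_def by (rule edges_of_colour_classes) simp
  also have "{x \<in> ?X. c x < k} = ?X"
    using c by (auto simp: forest_colouring_def)
  finally have "(\<Sum>i<k. T i) = E"
    using edges_of_nth[of xs] xs by simp
  moreover have "\<forall>i<k. is_forest (T i)"
    using c by (simp add: T_def forest_colouring_def)
  ultimately show ?thesis
    by blast
qed

section \<open>Spanning-tree packings and edge connectivity\<close>

lemma sparse_tight_spanning_trees:
  assumes fin: "finite V" "V \<noteq> {}" and E: "edges_in V E" and sparse: "sparse k V E"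
    and size: "size E = k * (card V - 1)"
  shows "\<exists>T. (\<forall>i<k. spanning_tree V E (T i)) \<and> (\<Sum>i<k. T i) = E"
proof -
  obtain T where forests: "\<forall>i<k. is_forest (T i)" and sum: "(\<Sum>i<k. T i) = E"
    using forest_decomposition[OF fin(1) E] sparseD[OF sparse E] by blast
  have TE: "T i \<subseteq># E" if "i < k" for i
    using summand_submset_sum[OF that, of T] sum by simp
  have count: "size (T i) + num_comps V (T i) = card V" if "i < k" for i
    using forest_size_plus_num_comps[OF fin(1) edges_in_submset[OF E TE[OF that]]] forests that by blast
  have le: "size (T i) \<le> card V - 1" if "i < k" for i
    using count[OF that] num_comps_pos[OF fin, of "T i"] by linarith
  have "(\<Sum>i<k. size (T i)) = size (\<Sum>i<k. T i)"
    by (rule size_multiset_sum[symmetric])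
  then have "(\<Sum>i<k. size (T i)) = k * (card V - 1)"
    using sum size by simp
  then have full: "size (T i) = card V - 1" if "i < k" for i
  proof (rule contrapos_pp)
    assume "size (T i) \<noteq> card V - 1"
    then have "(\<Sum>i<k. size (T i)) < (\<Sum>i<k. card V - 1)"
      using le that by (intro sum_strict_mono_ex1) (auto simp: order_less_le)
    then show "(\<Sum>i<k. size (T i)) \<noteq> k * (card V - 1)"
      by simp
  qed
  have "spanning_tree V E (T i)" if "i < k" for i
  proof (rule spanning_treeI[OF fin(1) edges_in_submset[OF E TE[OF that]] TE[OF that]])
    have "0 < card V"
      using fin card_gt_0_iff by blast
    then show "size (T i) + 1 = card V"
      using full[OF that] by simp
    then show "connected_mg V (T i)"
      using count[OF that] connected_mg_iff_num_comps[OF fin(1)] fin(2) by simp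
  qed
  with sum show ?thesis
    by blast
qed

lemma has_disjoint_trees_size:
  assumes "finite V" "edges_in V E" "has_disjoint_trees V E j"
  shows "j * (card V - 1) \<le> size E"
proof -
  obtain T where T: "\<forall>i<j. spanning_tree V E (T i)" "(\<Sum>i<j. T i) \<subseteq># E"
    using assms(3) by (auto simp: has_disjoint_trees_def)
  have "size (T i) = card V - 1" if "i < j" for i
    using spanning_tree_size[OF assms(1,2)] T(1) that by (metis add_diff_cancel_right')
  then have "(\<Sum>i<j. size (T i)) = j * (card V - 1)"
    by simp
  then show ?thesis
    using size_mset_mono[OF T(2)] by (simp add: size_multiset_sum)
qed

lemma has_disjoint_trees_tree_pack:
  assumes "finite V" "2 \<le> card V" "edges_in V E"
  shows "has_disjoint_trees V E (tree_pack V E)"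
  unfolding tree_pack_def
proof (rule GreatestI_nat[of _ 0 "size E"])
  show "has_disjoint_trees V E 0"
    by (simp add: has_disjoint_trees_def)
  fix j assume "has_disjoint_trees V E j"
  then have "j * (card V - 1) \<le> size E"
    by (rule has_disjoint_trees_size[OF assms(1,3)])
  moreover have "j * 1 \<le> j * (card V - 1)"
    using assms(2) by (intro mult_le_mono2) linarith
  ultimately show "j \<le> size E"
    by linarith
qed

lemma tree_pack_size_bound:
  assumes "mgraph V E" "2 \<le> card V"
  shows "tree_pack V E * (card V - 1) \<le> size E"
proof -
  have "finite V" "edges_in V E"
    using assms(1) by (simp_all add: mgraph_iff_edges_in)
  then show ?thesis
    using has_disjoint_trees_size has_disjoint_trees_tree_pack assms(2) by blast
qed

lemma tree_pack_eqI:
  assumes "finite V" "2 \<le> card V" "edges_in V E"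
    and "has_disjoint_trees V E k" "size E = k * (card V - 1)"
  shows "tree_pack V E = k"
  unfolding tree_pack_def
proof (rule Greatest_equality[of "has_disjoint_trees V E" k, OF assms(4)])
  fix j assume "has_disjoint_trees V E j"
  then have "j * (card V - 1) \<le> k * (card V - 1)"
    using has_disjoint_trees_size[OF assms(1,3)] assms(5) by simp
  then show "j \<le> k"
    using assms(2) by simp
qed

lemma summand_survives_removal:
  fixes T :: "nat \<Rightarrow> 'b multiset"
  shows "size F < k \<Longrightarrow> \<exists>i<k. T i \<subseteq># (\<Sum>i<k. T i) - F"
proof (induction k arbitrary: F)
  case (Suc k)
  show ?case
  proof (cases "size (F - T k) < k")
    case True
    then obtain i where "i < k" "T i \<subseteq># (\<Sum>i<k. T i) - (F - T k)"
      using Suc.IH by blast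
    moreover have "(\<Sum>i<k. T i) - (F - T k) \<subseteq># (\<Sum>i<Suc k. T i) - F"
      unfolding subseteq_mset_def by simp arith
    ultimately show ?thesis
      by (meson less_SucI subset_mset.order_trans)
  next
    case False
    have "F = (F - T k) + (F \<inter># T k)"
      by (simp add: multiset_eq_iff min_def)
    then have "size F = size (F - T k) + size (F \<inter># T k)"
      by (metis size_union)
    then have "size (F \<inter># T k) = 0"
      using False Suc.prems by linarith
    then have disjoint: "F \<inter># T k = {#}"
      by simp
    have "min (count F x) (count (T k) x) = 0" for x
      using arg_cong[OF disjoint, of "\<lambda>M. count M x"] by simp
    then have "count F x = 0 \<or> count (T k) x = 0" for x
      by (metis min_def)
    then have "T k \<subseteq># (\<Sum>i<Suc k. T i) - F"
      unfolding subseteq_mset_def by (metis count_diff count_union diff_zero le_add2 le_refl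
          sum.lessThan_Suc zero_le add_diff_cancel_left')
    then show ?thesis
      by blast
  qed
qed simp

lemma edge_conn_eqI:
  assumes trees: "has_disjoint_trees V E k"
    and cut: "F \<subseteq># E" "size F = k" "\<not> connected_mg V (E - F)"
  shows "edge_conn V E = k"
  unfolding edge_conn_def
proof (rule Least_equality)
  show "\<exists>F. F \<subseteq># E \<and> size F = k \<and> \<not> connected_mg V (E - F)"
    using cut by blast
next
  fix m assume "\<exists>F'. F' \<subseteq># E \<and> size F' = m \<and> \<not> connected_mg V (E - F')"
  then obtain F' where F': "F' \<subseteq># E" "size F' = m" "\<not> connected_mg V (E - F')"
    by blast
  show "k \<le> m"
  proof (rule ccontr)
    assume "\<not> k \<le> m"
    obtain T where T: "\<forall>i<k. spanning_tree V E (T i)" "(\<Sum>i<k. T i) \<subseteq># E"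
      using trees by (auto simp: has_disjoint_trees_def)
    obtain i where "i < k" "T i \<subseteq># (\<Sum>i<k. T i) - F'"
      using summand_survives_removal \<open>\<not> k \<le> m\<close> F'(2) by (metis not_le)
    moreover have "(\<Sum>i<k. T i) - F' \<subseteq># E - F'"
      using T(2) by (simp add: subseteq_mset_def diff_le_mono)
    ultimately have "T i \<subseteq># E - F'" "connected_mg V (T i)"
      using T(1) by (auto simp: spanning_tree_def intro: subset_mset.order_trans)
    then have "connected_mg V (E - F')"
      using reach_mono[of "T i" "E - F'"] unfolding connected_mg_def by blast
    with F'(3) show False ..
  qed
qed

lemma tight_packing_sparse:
  assumes "finite V" "edges_in V E" "has_disjoint_trees V E k" "size E = k * (card V - 1)"
  shows "sparse k V E"
proof -
  obtain T where T: "\<forall>i<k. spanning_tree V E (T i)" "(\<Sum>i<k. T i) \<subseteq># E"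
    using assms(3) by (auto simp: has_disjoint_trees_def)
  have "size (T i) = card V - 1" if "i < k" for i
    using spanning_tree_size[OF assms(1,2)] T(1) that by (metis add_diff_cancel_right')
  then have "size (\<Sum>i<k. T i) = size E"
    using assms(4) by (simp add: size_multiset_sum)
  then have "(\<Sum>i<k. T i) = E"
    using T(2) by (metis mset_subset_size subset_mset.le_less less_irrefl)
  then show ?thesis
    using sparse_forest_cover[OF assms(1)] T(1) spanning_tree_is_forest by blast
qed

lemma reach_isolated:
  assumes "\<forall>e\<in>#E. v \<notin> e" "(u, v) \<in> reach E"
  shows "u = v"
  using assms(2)
proof (cases rule: rtranclE)
  case (step y)
  then show ?thesis
    using assms(1) by (auto simp: adj_def)
qed

lemma edge_conn_cut:
  assumes "finite V" "2 \<le> card V"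
  shows "\<exists>F. F \<subseteq># E \<and> size F = edge_conn V E \<and> \<not> connected_mg V (E - F)"
proof -
  obtain a b where "a \<in> V" "b \<in> V" "a \<noteq> b"
    using assms by (metis card_le_Suc0_iff_eq not_less_eq_eq numeral_2_eq_2)
  then have "\<not> connected_mg V (E - E)"
    using reach_isolated[of "{#}" b a] by (auto simp: connected_mg_def)
  then have "\<exists>F. F \<subseteq># E \<and> size F = size E \<and> \<not> connected_mg V (E - F)"
    by blast
  then show ?thesis
    unfolding edge_conn_def
    by (rule LeastI[where P = "\<lambda>m. \<exists>F. F \<subseteq># E \<and> size F = m \<and> \<not> connected_mg V (E - F)"])
qed

lemma mem_repeat_mset: "x \<in># repeat_mset k M \<longleftrightarrow> 0 < k \<and> x \<in># M"
  by (metis count_greater_zero_iff count_repeat_mset nat_0_less_mult_iff)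

lemma sum_const_mset: "(\<Sum>i<k. M) = repeat_mset k (M :: 'b multiset)"
  by (induction k) (simp_all add: add.commute)

definition star :: "'a \<Rightarrow> 'a set \<Rightarrow> 'a set multiset" where
  "star c V = image_mset (\<lambda>v. {c, v}) (mset_set (V - {c}))"

lemma mem_star: "finite V \<Longrightarrow> x \<in># star c V \<longleftrightarrow> (\<exists>v\<in>V - {c}. x = {c, v})"
  by (auto simp: star_def)

lemma edges_in_star:
  assumes "finite V" "c \<in> V"
  shows "edges_in V (star c V)"
  unfolding edges_in_def
proof
  fix x assume "x \<in># star c V"
  then obtain v where "v \<in> V - {c}" "x = {c, v}"
    using mem_star[OF assms(1)] by blast
  with assms(2) show "\<exists>a\<in>V. \<exists>b\<in>V. a \<noteq> b \<and> x = {a, b}"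
    by blast
qed

lemma size_star:
  assumes "finite V" "c \<in> V"
  shows "size (star c V) + 1 = card V"
proof -
  have "0 < card V"
    using assms card_gt_0_iff by blast
  with assms show ?thesis
    by (simp add: star_def)
qed

lemma star_spanning_tree:
  assumes fin: "finite V" and c: "c \<in> V" and sub: "star c V \<subseteq># E"
  shows "spanning_tree V E (star c V)"
proof (rule spanning_treeI[OF fin edges_in_star[OF fin c] sub _ size_star[OF fin c]])
  have "(c, u) \<in> reach (star c V)" if "u \<in> V" for u
    using that fin reach_edge[of c u "star c V"] by (cases "u = c") (auto simp: mem_star)
  then show "connected_mg V (star c V)"
    using c reach_sym rtrancl_trans unfolding connected_mg_def by (metis empty_iff)
qed

lemma star_remove_leaf:
  assumes "finite V" "v \<in> V - {c}"
  shows "\<forall>e\<in>#star c V - {#{c, v}#}. v \<notin> e"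
proof -
  have "star c V - {#{c, v}#} = image_mset (\<lambda>v. {c, v}) (mset_set (V - {c} - {v}))"
    using edges_of_remove[of "V - {c}" v "\<lambda>v. {c, v}"] assms by (simp add: edges_of_def star_def)
  then show ?thesis
    using assms by auto
qed

text \<open>The witness is the star with every edge taken \<open>k\<close> times: it is \<open>k\<close> copies of a spanning
  tree, and the \<open>k\<close> copies of one edge cut off a leaf.\<close>

lemma exists_kappa_tau_graph:
  assumes fin: "finite V" and two: "2 \<le> card V" and "0 < k"
  shows "\<exists>E. mgraph V E \<and> edge_conn V E = k \<and> tree_pack V E = k \<and> size E = k * (card V - 1)"
proof -
  obtain c where c: "c \<in> V"
    using two by fastforce
  then have "card (V - {c}) \<noteq> 0"
    using two fin by simp
  then obtain v where v: "v \<in> V - {c}"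
    by (metis card.empty ex_in_conv)
  define E where "E = repeat_mset k (star c V)"
  define F where "F = repeat_mset k {#{c, v}#}"
  have "star c V \<subseteq># E"
    using \<open>0 < k\<close> by (simp add: E_def subseteq_mset_def)
  then have tree: "spanning_tree V E (star c V)"
    by (rule star_spanning_tree[OF fin c])
  then have trees: "has_disjoint_trees V E k"
    unfolding has_disjoint_trees_def by (auto intro!: exI[of _ "\<lambda>_. star c V"] simp: sum_const_mset E_def)
  have "size (star c V) = card V - 1"
    using size_star[OF fin c] by simp
  then have E: "edges_in V E" "size E = k * (card V - 1)"
    using edges_in_star[OF fin c] by (auto simp: E_def edges_in_def mem_repeat_mset)
  have "F \<subseteq># E"
    using fin v by (simp add: F_def E_def subseteq_mset_def mem_star) blast
  moreover have "E - F = repeat_mset k (star c V - {#{c, v}#})"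
    by (simp add: multiset_eq_iff F_def E_def diff_mult_distrib2)
  then have "(c, v) \<notin> reach (E - F)"
    using star_remove_leaf[OF fin v] reach_isolated[of "E - F" v c] v by (auto simp: mem_repeat_mset)
  then have "\<not> connected_mg V (E - F)"
    using c v by (auto simp: connected_mg_def)
  ultimately have "edge_conn V E = k" "tree_pack V E = k"
    using edge_conn_eqI[OF trees] tree_pack_eqI[OF fin two E(1) trees E(2)] by (simp_all add: F_def)
  then show ?thesis
    using E fin mgraph_iff_edges_in by blast
qed

lemma in_Fkn_iff:
  assumes "0 < k"
  shows "in_Fkn k n V E \<longleftrightarrow> 1 < n \<and> mgraph V E \<and> card V = n \<and> edge_conn V E = k \<and>
    tree_pack V E = k \<and> size E = k * (n - 1)"
proof
  assume F: "in_Fkn k n V E"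
  then have fin: "finite V" "2 \<le> card V"
    by (auto simp: in_Fkn_def mgraph_def)
  have minimal: "mgraph V E' \<and> card V = n \<and> edge_conn V E' = k \<and> tree_pack V E' = k \<Longrightarrow> size E \<le> size E'"
    for E'
    using F by (simp add: in_Fkn_def)
  have n: "card V = n"
    using F by (simp add: in_Fkn_def)
  obtain E' where "mgraph V E'" "edge_conn V E' = k" "tree_pack V E' = k" "size E' = k * (card V - 1)"
    using exists_kappa_tau_graph[OF fin assms] by blast
  then have "size E \<le> k * (n - 1)"
    using minimal[of E'] n by simp
  moreover have "k * (n - 1) \<le> size E"
    using F tree_pack_size_bound[of V E] fin n by (simp add: in_Fkn_def)
  ultimately show "1 < n \<and> mgraph V E \<and> card V = n \<and> edge_conn V E = k \<and> tree_pack V E = k \<and>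
      size E = k * (n - 1)"
    using F by (simp add: in_Fkn_def)
next
  assume "1 < n \<and> mgraph V E \<and> card V = n \<and> edge_conn V E = k \<and> tree_pack V E = k \<and>
      size E = k * (n - 1)"
  then show "in_Fkn k n V E"
    using tree_pack_size_bound by (fastforce simp: in_Fkn_def)
qed

section \<open>Density\<close>

lemma finite_submsets: "finite {F. F \<subseteq># E}"
proof -
  obtain xs where "mset xs = E"
    using ex_mset by blast
  have "{F. F \<subseteq># E} \<subseteq> mset ` {ys. set ys \<subseteq> set_mset E \<and> length ys \<le> size E}"
  proof safe
    fix F assume "F \<subseteq># E"
    moreover obtain ys where "mset ys = F"
      using ex_mset by blast
    moreover have "length ys \<le> size E"
      using size_mset_mono[OF \<open>F \<subseteq># E\<close>] \<open>mset ys = F\<close> by (metis size_mset)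
    ultimately show "F \<in> mset ` {ys. set ys \<subseteq> set_mset E \<and> length ys \<le> size E}"
      by (auto intro!: image_eqI[of _ _ ys] dest: mset_subset_eqD)
  qed
  then show ?thesis
    by (rule finite_subset) (simp add: finite_lists_length_le)
qed

lemma finite_subgraph_dens: "finite V \<Longrightarrow> finite {dens V' E' |V' E'. subgraph V' E' V E \<and> P V' E'}"
proof -
  assume "finite V"
  have "{dens V' E' |V' E'. subgraph V' E' V E \<and> P V' E'} \<subseteq>
      (\<lambda>(V', E'). dens V' E') ` (Pow V \<times> {F. F \<subseteq># E})"
    by (auto simp: subgraph_def)
  moreover have "finite (Pow V \<times> {F. F \<subseteq># E})"
    using \<open>finite V\<close> finite_submsets by blast
  ultimately show ?thesis
    by (rule finite_subset[OF _ finite_imageI])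
qed

lemma dens_iff_size:
  assumes "num_comps V E < card V"
  shows "dens V E \<le> real k \<longleftrightarrow> size E \<le> k * (card V - num_comps V E)"
    and "dens V E = real k \<longleftrightarrow> size E = k * (card V - num_comps V E)"
proof -
  define d where "d = card V - num_comps V E"
  have d: "real (card V) - real (num_comps V E) = real d" "0 < d"
    using assms by (simp_all add: d_def of_nat_diff)
  then have "dens V E \<le> real k \<longleftrightarrow> real (size E) \<le> real k * real d"
    by (simp add: dens_def divide_le_eq)
  also have "\<dots> \<longleftrightarrow> size E \<le> k * d"
    by (metis of_nat_le_iff of_nat_mult)
  finally show "dens V E \<le> real k \<longleftrightarrow> size E \<le> k * (card V - num_comps V E)"
    by (simp add: d_def)
  from d have "dens V E = real k \<longleftrightarrow> real (size E) = real k * real d"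
    by (simp add: dens_def divide_eq_eq)
  also have "\<dots> \<longleftrightarrow> size E = k * d"
    by (metis of_nat_eq_iff of_nat_mult)
  finally show "dens V E = real k \<longleftrightarrow> size E = k * (card V - num_comps V E)"
    by (simp add: d_def)
qed

lemma sparse_if_gamma_le:
  assumes G: "mgraph V E" and gamma: "gamma V E \<le> real k"
  shows "sparse k V E"
  unfolding sparse_def
proof (intro allI impI)
  fix V' E' assume sub: "V' \<subseteq> V" "edges_in V' E'" "E' \<subseteq># E"
  have fin: "finite V'"
    using G sub(1) finite_subset by (auto simp: mgraph_def)
  show "size E' \<le> k * (card V' - num_comps V' E')"
  proof (cases "E' = {#}")
    case False
    then have less: "num_comps V' E' < card V'"
      by (rule num_comps_less_card[OF fin sub(2)])
    have "subgraph V' E' V E"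
      using sub by (auto simp: subgraph_def edges_in_def)
    with less have "dens V' E' \<in> {dens V' E' |V' E'. subgraph V' E' V E \<and>
        real (card V') - real (num_comps V' E') \<noteq> 0}"
      by force
    moreover have "finite V"
      using G by (simp add: mgraph_def)
    ultimately have "dens V' E' \<le> gamma V E"
      unfolding gamma_def by (intro Max_ge finite_subgraph_dens)
    with gamma less show ?thesis
      using dens_iff_size(1) by fastforce
  qed simp
qed

lemma gamma_eq_if_sparse:
  assumes G: "mgraph V E" and sparse: "sparse k V E" and dens: "dens V E = real k"
    and nonzero: "real (card V) - real (num_comps V E) \<noteq> 0"
  shows "gamma V E = real k"
  unfolding gamma_def
proof (rule Max_eqI)
  show "finite {dens V' E' |V' E'. subgraph V' E' V E \<and> real (card V') - real (num_comps V' E') \<noteq> 0}"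
    using G by (simp add: mgraph_def finite_subgraph_dens)
  show "real k \<in> {dens V' E' |V' E'. subgraph V' E' V E \<and> real (card V') - real (num_comps V' E') \<noteq> 0}"
  proof -
    have "subgraph V E V E"
      using G by (simp add: subgraph_def mgraph_def)
    with dens nonzero show ?thesis
      by (metis (mono_tags, lifting) mem_Collect_eq)
  qed
next
  fix d assume "d \<in> {dens V' E' |V' E'. subgraph V' E' V E \<and> real (card V') - real (num_comps V' E') \<noteq> 0}"
  then obtain V' E' where d: "d = dens V' E'" "subgraph V' E' V E"
    and nz: "real (card V') - real (num_comps V' E') \<noteq> 0"
    by blast
  have sub: "V' \<subseteq> V" "E' \<subseteq># E"
    using d(2) by (auto simp: subgraph_def)
  then have "finite V'"
    using G finite_subset by (auto simp: mgraph_def)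
  have "edges_in V' E'"
    using d(2) G edges_in_submset[of V E E'] sub unfolding subgraph_def mgraph_iff_edges_in edges_in_def
    by (metis insert_subset)
  have "card V' \<noteq> num_comps V' E'"
    using nz by simp
  then have "num_comps V' E' < card V'"
    using num_comps_le_card[OF \<open>finite V'\<close>, of E'] by linarith
  moreover have "size E' \<le> k * (card V' - num_comps V' E')"
    using sparse sub \<open>edges_in V' E'\<close> unfolding sparse_def by blast
  ultimately show "d \<le> real k"
    using dens_iff_size(1) d(1) by blast
qed

lemma K1_or_uniformly_dense_iff:
  assumes G: "mgraph V E" and conn: "connected_mg V E" and "0 < k"
  shows "is_K1 V E \<or> uniformly_dense (real k) V E \<longleftrightarrow> size E = k * (card V - 1) \<and> sparse k V E"
proof -
  have fin: "finite V" "edges_in V E"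
    using G by (simp_all add: mgraph_iff_edges_in)
  have one: "num_comps V E = 1" "V \<noteq> {}"
    using conn connected_mg_iff_num_comps[OF fin(1)] by simp_all
  show ?thesis
  proof (cases "card V = 1")
    case True
    then have "E = {#}"
      using fin(2) unfolding edges_in_def by (metis card_1_singletonE multiset_nonemptyE singletonD)
    moreover have "sparse k V {#}"
      by (simp add: sparse_def)
    ultimately show ?thesis
      using True by (simp add: is_K1_def)
  next
    case False
    then have less: "num_comps V E < card V"
      using one fin(1) by (metis card_0_eq less_one linorder_neqE_nat)
    then have "\<not> is_K1 V E"
      using False by (simp add: is_K1_def)
    moreover have "dens V E = real k \<longleftrightarrow> size E = k * (card V - 1)"
      using dens_iff_size(2)[OF less] one by simp
    moreover have "real (card V) - real (num_comps V E) \<noteq> 0"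
      using less by simp
    ultimately show ?thesis
      unfolding uniformly_dense_def
      using sparse_if_gamma_le[OF G] gamma_eq_if_sparse[OF G] by fastforce
  qed
qed

section \<open>Edge-joins\<close>

lemma reach_closed:
  assumes closed: "\<forall>e\<in>#E. e \<inter> W \<noteq> {} \<longrightarrow> e \<subseteq> W" and "(u, x) \<in> reach E" "u \<in> W"
  shows "x \<in> W"
  using assms(2,3)
proof (induction rule: rtrancl_induct)
  case (step y z)
  then have "{y, z} \<in># E" "y \<in> W"
    by (auto simp: adj_def)
  then have "{y, z} \<subseteq> W"
    by (meson closed disjoint_iff insertI1)
  then show ?case
    by simp
qed

lemma disjoint_union_not_connected:
  assumes "mgraph V1 E1" "mgraph V2 E2" "V1 \<inter> V2 = {}" "V1 \<noteq> {}" "V2 \<noteq> {}"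
  shows "\<not> connected_mg (V1 \<union> V2) (E1 + E2)"
proof
  obtain u v where uv: "u \<in> V1" "v \<in> V2"
    using assms(4,5) by blast
  have "\<forall>e\<in>#E1 + E2. e \<inter> V1 \<noteq> {} \<longrightarrow> e \<subseteq> V1"
    using assms(1-3) by (auto simp: mgraph_def)
  moreover assume "connected_mg (V1 \<union> V2) (E1 + E2)"
  then have "(u, v) \<in> reach (E1 + E2)"
    using uv by (simp add: connected_mg_def)
  ultimately have "v \<in> V1"
    using reach_closed[of "E1 + E2" V1 u v] uv(1) by blast
  with uv assms(3) show False
    by blast
qed

lemma spanning_tree_join:
  assumes T1: "spanning_tree V1 E1 T1" and T2: "spanning_tree V2 E2 T2"
    and V: "finite V1" "finite V2" "V1 \<inter> V2 = {}" and E: "edges_in V1 E1" "edges_in V2 E2"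
    and uv: "u \<in> V1" "v \<in> V2" "{u, v} \<in># K"
  shows "spanning_tree (V1 \<union> V2) (E1 + E2 + K) (T1 + T2 + {#{u, v}#})"
proof (rule spanning_treeI)
  let ?T = "T1 + T2 + {#{u, v}#}"
  have sub: "T1 \<subseteq># E1" "T2 \<subseteq># E2"
    using T1 T2 by (simp_all add: spanning_tree_def)
  then have "edges_in (V1 \<union> V2) T1" "edges_in (V1 \<union> V2) T2"
    using edges_in_submset[OF E(1) sub(1)] edges_in_submset[OF E(2) sub(2)]
    by (auto intro: edges_in_mono[rotated])
  moreover have "u \<noteq> v"
    using uv V(3) by blast
  ultimately show "edges_in (V1 \<union> V2) ?T"
    using uv by auto
  have "{#{u, v}#} \<subseteq># K"
    using uv(3) by simp
  then show "?T \<subseteq># E1 + E2 + K"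
    using sub by (intro subset_mset.add_mono)
  show "size ?T + 1 = card (V1 \<union> V2)"
    using spanning_tree_size[OF V(1) E(1) T1] spanning_tree_size[OF V(2) E(2) T2] V
    by (simp add: card_Un_disjoint)
  have "(u, p) \<in> reach ?T" if "p \<in> V1 \<union> V2" for p
  proof (cases "p \<in> V1")
    case True
    then have "(u, p) \<in> reach T1"
      using T1 uv(1) by (simp add: spanning_tree_def connected_mg_def)
    then show ?thesis
      by (rule reach_mono[rotated]) simp
  next
    case False
    then have "(v, p) \<in> reach T2"
      using T2 uv(2) that by (simp add: spanning_tree_def connected_mg_def)
    then have "(v, p) \<in> reach ?T"
      by (rule reach_mono[rotated]) simp
    moreover have "(u, v) \<in> reach ?T"
      by (rule reach_edge) simp
    ultimately show ?thesis
      by (rule rtrancl_trans[rotated])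
  qed
  then have "(p, q) \<in> reach ?T" if "p \<in> V1 \<union> V2" "q \<in> V1 \<union> V2" for p q
    using that reach_sym rtrancl_trans by metis
  then show "connected_mg (V1 \<union> V2) ?T"
    using uv(1) unfolding connected_mg_def by blast
qed (use V in simp)

lemma sum_nth_singletons: "(\<Sum>i<length xs. {#xs ! i#}) = mset xs"
proof (induction xs)
  case (Cons x xs)
  have "(\<Sum>i<length (x # xs). {#(x # xs) ! i#}) = {#x#} + (\<Sum>i<length xs. {#xs ! i#})"
    by (simp only: length_Cons sum.lessThan_Suc_shift) simp
  then show ?case
    using Cons by simp
qed simp

lemma edge_join_mgraph:
  assumes "is_edge_join V E k V1 E1 V2 E2"
  shows "mgraph V E"
proof -
  obtain K where K: "\<forall>e\<in>#K. \<exists>u\<in>V1. \<exists>v\<in>V2. e = {u, v}" and V: "V = V1 \<union> V2"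
    and E: "E = E1 + E2 + K" and G: "mgraph V1 E1" "mgraph V2 E2" "V1 \<inter> V2 = {}"
    using assms by (auto simp: is_edge_join_def)
  have "edges_in V K"
    using K G(3) unfolding edges_in_def V by (metis UnCI disjoint_iff)
  then show ?thesis
    using G edges_in_mono[of V1 V] edges_in_mono[of V2 V] by (simp add: V E mgraph_iff_edges_in)
qed

lemma edge_join_tree_packing:
  assumes join: "is_edge_join V E k V1 E1 V2 E2"
    and T1: "\<forall>i<k. spanning_tree V1 E1 (T1 i)" "(\<Sum>i<k. T1 i) = E1"
    and T2: "\<forall>i<k. spanning_tree V2 E2 (T2 i)" "(\<Sum>i<k. T2 i) = E2"
  shows "has_disjoint_trees V E k"
proof -
  obtain K where K: "size K = k" "\<forall>e\<in>#K. \<exists>u\<in>V1. \<exists>v\<in>V2. e = {u, v}" and V: "V = V1 \<union> V2"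
    and E: "E = E1 + E2 + K"
    using join by (auto simp: is_edge_join_def)
  have G: "finite V1" "finite V2" "V1 \<inter> V2 = {}" "edges_in V1 E1" "edges_in V2 E2"
    using join by (simp_all add: is_edge_join_def mgraph_iff_edges_in)
  obtain xs where xs: "mset xs = K" "length xs = k"
    using K(1) by (metis ex_mset size_mset)
  define T where "T i = T1 i + T2 i + {#xs ! i#}" for i
  have "spanning_tree V E (T i)" if "i < k" for i
  proof -
    have "xs ! i \<in># K"
      using xs that by (metis nth_mem set_mset_mset)
    moreover obtain u v where "u \<in> V1" "v \<in> V2" "xs ! i = {u, v}"
      using K(2) calculation by blast
    ultimately show ?thesis
      unfolding T_def V E using spanning_tree_join[OF _ _ G] T1(1) T2(1) that by simp
  qed
  moreover have "(\<Sum>i<k. T i) = E"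
    unfolding T_def sum.distrib using T1(2) T2(2) sum_nth_singletons[of xs] xs by (simp add: E)
  ultimately show ?thesis
    unfolding has_disjoint_trees_def by auto
qed

lemma edge_join_imp_Fk:
  assumes k: "0 < k" and join: "is_edge_join V E k V1 E1 V2 E2"
    and sides: "is_K1 V1 E1 \<or> uniformly_dense (real k) V1 E1" "is_K1 V2 E2 \<or> uniformly_dense (real k) V2 E2"
  shows "in_Fk k V E"
proof -
  obtain K where K: "size K = k" and V: "V = V1 \<union> V2" and E: "E = E1 + E2 + K"
    using join by (auto simp: is_edge_join_def)
  have G: "mgraph V1 E1" "mgraph V2 E2" "connected_mg V1 E1" "connected_mg V2 E2" "V1 \<inter> V2 = {}"
    using join by (simp_all add: is_edge_join_def)
  then have fin: "finite V1" "finite V2" "edges_in V1 E1" "edges_in V2 E2" "V1 \<noteq> {}" "V2 \<noteq> {}"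
    by (simp_all add: mgraph_iff_edges_in connected_mg_def)
  have tight: "size E1 = k * (card V1 - 1)" "sparse k V1 E1" "size E2 = k * (card V2 - 1)" "sparse k V2 E2"
    using K1_or_uniformly_dense_iff[OF G(1,3) k] K1_or_uniformly_dense_iff[OF G(2,4) k] sides by simp_all
  obtain T1 where T1: "\<forall>i<k. spanning_tree V1 E1 (T1 i)" "(\<Sum>i<k. T1 i) = E1"
    using sparse_tight_spanning_trees[OF fin(1,5,3) tight(2,1)] by blast
  obtain T2 where T2: "\<forall>i<k. spanning_tree V2 E2 (T2 i)" "(\<Sum>i<k. T2 i) = E2"
    using sparse_tight_spanning_trees[OF fin(2,6,4) tight(4,3)] by blast
  have trees: "has_disjoint_trees V E k"
    by (rule edge_join_tree_packing[OF join T1 T2])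
  have card: "card V = card V1 + card V2" "0 < card V1" "0 < card V2"
    using fin G(5) by (simp_all add: V card_Un_disjoint card_gt_0_iff)
  have size: "size E = k * (card V - 1)"
    using tight(1,3) K card by (simp add: E algebra_simps)
  have "\<not> connected_mg V (E - K)"
    using disjoint_union_not_connected[OF G(1,2,5) fin(5,6)] by (simp add: V E)
  then have "edge_conn V E = k"
    using edge_conn_eqI[OF trees _ K] by (simp add: E)
  moreover have "mgraph V E"
    by (rule edge_join_mgraph[OF join])
  moreover have "tree_pack V E = k"
    using tree_pack_eqI[OF _ _ _ trees size] calculation(2) card by (simp add: mgraph_iff_edges_in)
  ultimately have "in_Fkn k (card V) V E"
    using in_Fkn_iff[OF k, of "card V" V E] size card by linarith
  moreover have "1 < card V"
    using card by simp
  ultimately show ?thesis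
    unfolding in_Fk_def by blast
qed

lemma edge_partition:
  assumes E: "edges_in V E" and V: "V = X \<union> Y" "X \<inter> Y = {}"
  shows "E = {#e \<in># E. e \<subseteq> X#} + {#e \<in># E. e \<subseteq> Y#} + {#e \<in># E. \<not> e \<subseteq> X \<and> \<not> e \<subseteq> Y#}"
    and "edges_in X {#e \<in># E. e \<subseteq> X#}" "edges_in Y {#e \<in># E. e \<subseteq> Y#}"
    and "\<forall>e\<in>#{#e \<in># E. \<not> e \<subseteq> X \<and> \<not> e \<subseteq> Y#}. \<exists>p\<in>X. \<exists>q\<in>Y. e = {p, q}"
proof -
  have edge: "\<exists>a\<in>V. \<exists>b\<in>V. a \<noteq> b \<and> e = {a, b}" if "e \<in># E" for e
    using E that by (simp add: edges_in_def)
  have "\<not> (e \<subseteq> X \<and> e \<subseteq> Y)" if "e \<in># E" for e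
    using edge[OF that] V(2) by blast
  then show "E = {#e \<in># E. e \<subseteq> X#} + {#e \<in># E. e \<subseteq> Y#} + {#e \<in># E. \<not> e \<subseteq> X \<and> \<not> e \<subseteq> Y#}"
    by (induction E) auto
  show "edges_in X {#e \<in># E. e \<subseteq> X#}" "edges_in Y {#e \<in># E. e \<subseteq> Y#}"
    using edge by (fastforce simp: edges_in_def)+
  show "\<forall>e\<in>#{#e \<in># E. \<not> e \<subseteq> X \<and> \<not> e \<subseteq> Y#}. \<exists>p\<in>X. \<exists>q\<in>Y. e = {p, q}"
    using edge V(1) by (fastforce simp: insert_commute)
qed

lemma crossing_edges_submset_cut:
  assumes E: "edges_in V E" and X: "X = {x \<in> V. (u, x) \<in> reach (E - F)}"
  shows "{#e \<in># E. \<not> e \<subseteq> X \<and> \<not> e \<subseteq> V - X#} \<subseteq># F"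
  unfolding subseteq_mset_def
proof
  fix e
  show "count {#e \<in># E. \<not> e \<subseteq> X \<and> \<not> e \<subseteq> V - X#} e \<le> count F e"
  proof (cases "e \<in># E \<and> \<not> e \<subseteq> X \<and> \<not> e \<subseteq> V - X")
    case True
    then obtain a b where ab: "a \<in> V" "b \<in> V" "e = {a, b}"
      using E unfolding edges_in_def by blast
    then have "(a \<in> X \<and> b \<in> V - X) \<or> (b \<in> X \<and> a \<in> V - X)"
      using True by auto
    then obtain p q where pq: "p \<in> X" "q \<in> V - X" "e = {p, q}"
      using ab(3) insert_commute by metis
    have "e \<notin># E - F"
    proof
      assume "e \<in># E - F"
      then have "(u, q) \<in> reach (E - F)"
        using pq X reach_edge[of p q "E - F"] by (auto intro: rtrancl_trans)
      then show False
        using pq X by blast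
    qed
    then show ?thesis
      by (simp add: not_in_iff)
  qed (auto simp: not_in_iff)
qed

text \<open>Counting: the two sides carry at most \<open>k (|X| - \<omega>\<^sub>1) + k (|Y| - \<omega>\<^sub>2)\<close> edges and the cut
  at most \<open>k\<close>, against \<open>k (|X| + |Y| - 1)\<close> in total; so both sides are connected and all
  bounds are attained.\<close>

lemma tight_split_is_edge_join:
  assumes k: "0 < k" and fin: "finite V" and size: "size E = k * (card V - 1)" and sparse: "sparse k V E"
    and V: "V = X \<union> Y" "X \<inter> Y = {}" "X \<noteq> {}" "Y \<noteq> {}" and E: "E = E1 + E2 + K"
    and sides: "edges_in X E1" "edges_in Y E2"
    and K: "\<forall>e\<in>#K. \<exists>p\<in>X. \<exists>q\<in>Y. e = {p, q}" "size K \<le> k"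
  shows "is_edge_join V E k X E1 Y E2 \<and> size E1 = k * (card X - 1) \<and> size E2 = k * (card Y - 1)"
proof -
  have finXY: "finite X" "finite Y"
    using fin V(1) by simp_all
  have "sparse k X E1" "sparse k Y E2"
    using sparse_subgraph[OF sparse] V(1) E by simp_all
  then have b1: "size E1 \<le> k * (card X - num_comps X E1)" and b2: "size E2 \<le> k * (card Y - num_comps Y E2)"
    using sides by (simp_all add: sparseD)
  have w: "0 < num_comps X E1" "num_comps X E1 \<le> card X" "0 < num_comps Y E2" "num_comps Y E2 \<le> card Y"
    using num_comps_pos[OF finXY(1) V(3)] num_comps_pos[OF finXY(2) V(4)] num_comps_le_card finXY
    by simp_all
  have card: "card V = card X + card Y"
    using finXY V(1,2) by (simp add: card_Un_disjoint)
  have "k * (card V - 1) \<le> k * (card X - num_comps X E1) + k * (card Y - num_comps Y E2) + k"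
    using size b1 b2 K(2) E by simp
  also have "\<dots> = k * ((card X - num_comps X E1) + (card Y - num_comps Y E2) + 1)"
    by (simp add: algebra_simps)
  finally have "card V - 1 \<le> (card X - num_comps X E1) + (card Y - num_comps Y E2) + 1"
    using k mult_le_cancel1 by blast
  then have one: "num_comps X E1 = 1" "num_comps Y E2 = 1"
    using w card by linarith+
  have "card V - 1 = (card X - 1) + (card Y - 1) + 1"
    using card w by linarith
  then have "k * (card V - 1) = k * (card X - 1) + k * (card Y - 1) + k"
    by (simp add: distrib_left)
  then have sizes: "size E1 = k * (card X - 1)" "size E2 = k * (card Y - 1)" "size K = k"
    using size b1 b2 K(2) E one by simp_all
  have "connected_mg X E1" "connected_mg Y E2"
    using one V(3,4) connected_mg_iff_num_comps[OF finXY(1)] connected_mg_iff_num_comps[OF finXY(2)]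
    by simp_all
  then have "is_edge_join V E k X E1 Y E2"
    using finXY sides V(1,2) E K(1) sizes(3) by (auto simp: is_edge_join_def mgraph_iff_edges_in)
  with sizes show ?thesis
    by simp
qed

lemma Fk_imp_edge_join:
  assumes k: "0 < k" and F: "in_Fk k V E"
  shows "\<exists>V1 E1 V2 E2. is_edge_join V E k V1 E1 V2 E2 \<and>
    (is_K1 V1 E1 \<or> uniformly_dense (real k) V1 E1) \<and> (is_K1 V2 E2 \<or> uniformly_dense (real k) V2 E2)"
proof -
  obtain n where "in_Fkn k n V E"
    using F by (auto simp: in_Fk_def)
  then have "1 < n \<and> mgraph V E \<and> card V = n \<and> edge_conn V E = k \<and> tree_pack V E = k \<and>
      size E = k * (n - 1)"
    using in_Fkn_iff[OF k] by blast
  then have G: "finite V" "edges_in V E" "2 \<le> card V" and conn: "edge_conn V E = k"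
    and pack: "tree_pack V E = k" and size: "size E = k * (card V - 1)"
    by (auto simp: mgraph_iff_edges_in)
  have sparse: "sparse k V E"
    using tight_packing_sparse[OF G(1,2) _ size] has_disjoint_trees_tree_pack[OF G(1,3,2)] pack by simp
  obtain F where F: "F \<subseteq># E" "size F = k" "\<not> connected_mg V (E - F)"
    using edge_conn_cut[OF G(1,3), of E] conn by blast
  then obtain u v where uv: "u \<in> V" "v \<in> V" "(u, v) \<notin> reach (E - F)"
    using G(3) by (auto simp: connected_mg_def)
  define X where "X = {x \<in> V. (u, x) \<in> reach (E - F)}"
  let ?Y = "V - X"
  let ?E1 = "{#e \<in># E. e \<subseteq> X#}" and ?E2 = "{#e \<in># E. e \<subseteq> ?Y#}"
    and ?K = "{#e \<in># E. \<not> e \<subseteq> X \<and> \<not> e \<subseteq> ?Y#}"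
  have V: "V = X \<union> ?Y" "X \<inter> ?Y = {}" "X \<noteq> {}" "?Y \<noteq> {}"
    using uv by (auto simp: X_def)
  have "size ?K \<le> k"
    using size_mset_mono[OF crossing_edges_submset_cut[OF G(2) X_def]] F(2) by simp
  then have join: "is_edge_join V E k X ?E1 ?Y ?E2"
    and tight: "size ?E1 = k * (card X - 1)" "size ?E2 = k * (card ?Y - 1)"
    using tight_split_is_edge_join[OF k G(1) size sparse V edge_partition[OF G(2) V(1,2)]] by auto
  have "sparse k X ?E1" "sparse k ?Y ?E2"
    using sparse_subgraph[OF sparse] by (auto simp: X_def)
  moreover have sides: "mgraph X ?E1" "connected_mg X ?E1" "mgraph ?Y ?E2" "connected_mg ?Y ?E2"
    using join by (simp_all add: is_edge_join_def)
  ultimately have "is_K1 X ?E1 \<or> uniformly_dense (real k) X ?E1"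
      "is_K1 ?Y ?E2 \<or> uniformly_dense (real k) ?Y ?E2"
    using K1_or_uniformly_dense_iff[OF sides(1,2) k] K1_or_uniformly_dense_iff[OF sides(3,4) k] tight
    by simp_all
  with join show ?thesis
    by blast
qed

theorem theorem4p2:
  fixes k :: nat and V :: "'a set" and E :: "'a set multiset"
  assumes "k > 0"
  shows "in_Fk k V E \<longleftrightarrow>
    (\<exists>V1 E1 V2 E2. is_edge_join V E k V1 E1 V2 E2 \<and>
       (is_K1 V1 E1 \<or> uniformly_dense (real k) V1 E1) \<and>
       (is_K1 V2 E2 \<or> uniformly_dense (real k) V2 E2))"
  using Fk_imp_edge_join[OF assms] edge_join_imp_Fk[OF assms] by blast

end
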